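(* There is no orthonormal basis $(f_n)_{n\ge0}$ of $C(\mathbb{Z}_p,\mathbb{Q}_p)$ such that every stationary $C(\mathbb{Z}_p,\mathbb{Q}_p)$-valued $\mathbb{Q}_p$-Gaussian random variable $X$ can be written as $X=\sum_{n=0}^\infty A_nf_n$ for some sequence $(A_n)_{n\ge0}$ of independent $\mathbb{Q}_p$-valued $\mathbb{Q}_p$-Gaussian random variables.
   Context: $\mathbb{Q}_p$ is the field of $p$-adic numbers with $p$-adic absolute value $|\cdot|$ (non-archimedean: $|x+y|\le|x|\vee|y|$), $\mathbb{Z}_p=\{x:|x|\le1\}$. $C(\mathbb{Z}_p,\mathbb{Q}_p)$ is the Banach space over $\mathbb{Q}_p$ of continuous functions $\mathbb{Z}_p\to\mathbb{Q}_p$ with sup norm $\|\cdot\|_C$. A set $F$ in a normed space over $\mathbb{Q}_p$ is orthonormal if $\|\sum_{i=1}^k\alpha_ix_i\|=\bigvee_{i=1}^k|\alpha_i|$ for all finite $\{x_1,\dots,x_k\}\subset F$ and $\alpha_i\in\mathbb{Q}_p$ (so each $x\in F$ has norm $1$); an orthonormal basis is an orthonormal sequence whose closed linear span is the whole space. $\mathbb{Q}_p^2$ has norm $|(x_1,x_2)|=|x_1|\vee|x_2|$. For a separable Banach space $E$ over $\mathbb{Q}_p$, an $E$-valued random variable $X$ is $\mathbb{Q}_p$-Gaussian if whenever $X_1,X_2$ are independent copies of $X$ and $(\alpha_{11},\alpha_{12}),(\alpha_{21},\alpha_{22})$ is an orthonormal pair in $\mathbb{Q}_p^2$, $(\alpha_{11}X_1+\alpha_{12}X_2,\alpha_{21}X_1+\alpha_{22}X_2)$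 has the same law as $(X_1,X_2)$. A $C(\mathbb{Z}_p,\mathbb{Q}_p)$-valued random variable $X$ is stationary if $X(\cdot+s)$ has the same law as $X$ for all $s\in\mathbb{Z}_p$. The series $\sum A_nf_n$ is understood as converging almost surely in $C(\mathbb{Z}_p,\mathbb{Q}_p)$. *)

theory Defs
  imports "HOL-Probability.Probability" "HOL-Computational_Algebra.Computational_Algebra"
begin

definition padic_abs :: "nat \<Rightarrow> rat \<Rightarrow> real" where
  "padic_abs p q =
     (if q = 0 then 0
      else (case quotient_of q of (a, b) \<Rightarrow>
              real p powr (real (multiplicity (int p) b) - real (multiplicity (int p) a))))"

text \<open>This is the defining property of Q_p
  (the completion of Q), which determines (K, nv) up to unique isometric isomorphism.\<close>

definition is_Qp :: "nat \<Rightarrow> ('k::field_char_0 \<Rightarrow> real) \<Rightarrow> bool" where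
  "is_Qp p nv \<longleftrightarrow>
     (\<forall>x. nv x \<ge> 0) \<and> (\<forall>x. nv x = 0 \<longleftrightarrow> x = 0) \<and>
     (\<forall>x y. nv (x * y) = nv x * nv y) \<and>
     (\<forall>x y. nv (x + y) \<le> max (nv x) (nv y)) \<and>
     (\<forall>q. nv (of_rat q) = padic_abs p q) \<and>
     (\<forall>s::nat \<Rightarrow> 'k. (\<forall>e>0. \<exists>N. \<forall>m\<ge>N. \<forall>n\<ge>N. nv (s m - s n) < e) \<longrightarrow>
        (\<exists>l. \<forall>e>0. \<exists>N. \<forall>n\<ge>N. nv (s n - l) < e)) \<and>
     (\<forall>x. \<forall>e>0. \<exists>q. nv (x - of_rat q) < e)"

definition Zp :: "('k::field_char_0 \<Rightarrow> real) \<Rightarrow> 'k set" where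
  "Zp nv = {x. nv x \<le> 1}"

definition nv_open :: "('k::field_char_0 \<Rightarrow> real) \<Rightarrow> 'k set \<Rightarrow> bool" where
  "nv_open nv U \<longleftrightarrow> (\<forall>x\<in>U. \<exists>e>0. \<forall>y. nv (y - x) < e \<longrightarrow> y \<in> U)"

definition Kborel :: "('k::field_char_0 \<Rightarrow> real) \<Rightarrow> 'k measure" where
  "Kborel nv = sigma UNIV (Collect (nv_open nv))"

text \<open>Elements of C(Z_p,Q_p) are represented by functions K => K that are continuous on Z_p
  and vanish outside Z_p (so that the representation is unique).\<close>
definition Ccarrier :: "('k::field_char_0 \<Rightarrow> real) \<Rightarrow> ('k \<Rightarrow> 'k) set" where
  "Ccarrier nv = {f. (\<forall>x\<in>Zp nv. \<forall>e>0. \<exists>d>0. \<forall>y\<in>Zp nv. nv (y - x) < d \<longrightarrow> nv (f y - f x) < e)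
                   \<and> (\<forall>x. x \<notin> Zp nv \<longrightarrow> f x = 0)}"

definition supnorm :: "('k::field_char_0 \<Rightarrow> real) \<Rightarrow> ('k \<Rightarrow> 'k) \<Rightarrow> real" where
  "supnorm nv f = (SUP x\<in>Zp nv. nv (f x))"

definition C_open :: "('k::field_char_0 \<Rightarrow> real) \<Rightarrow> ('k \<Rightarrow> 'k) set \<Rightarrow> bool" where
  "C_open nv U \<longleftrightarrow> U \<subseteq> Ccarrier nv \<and>
     (\<forall>g\<in>U. \<exists>e>0. \<forall>h\<in>Ccarrier nv. supnorm nv (\<lambda>x. h x - g x) < e \<longrightarrow> h \<in> U)"

definition Cborel :: "('k::field_char_0 \<Rightarrow> real) \<Rightarrow> ('k \<Rightarrow> 'k) measure" where
  "Cborel nv = sigma (Ccarrier nv) (Collect (C_open nv))"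

definition orthonormal_seq_C :: "('k::field_char_0 \<Rightarrow> real) \<Rightarrow> (nat \<Rightarrow> 'k \<Rightarrow> 'k) \<Rightarrow> bool" where
  "orthonormal_seq_C nv f \<longleftrightarrow>
     (\<forall>n. f n \<in> Ccarrier nv) \<and>
     (\<forall>I \<alpha>. finite I \<and> I \<noteq> {} \<longrightarrow>
        supnorm nv (\<lambda>x. \<Sum>i\<in>I. \<alpha> i * f i x) = Max ((\<lambda>i. nv (\<alpha> i)) ` I))"

definition orthonormal_basis_C :: "('k::field_char_0 \<Rightarrow> real) \<Rightarrow> (nat \<Rightarrow> 'k \<Rightarrow> 'k) \<Rightarrow> bool" where
  "orthonormal_basis_C nv f \<longleftrightarrow> orthonormal_seq_C nv f \<and>
     (\<forall>g\<in>Ccarrier nv. \<forall>e>0. \<exists>I \<alpha>. finite I \<and>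
        supnorm nv (\<lambda>x. g x - (\<Sum>i\<in>I. \<alpha> i * f i x)) < e)"

definition orthonormal_pair :: "('k::field_char_0 \<Rightarrow> real) \<Rightarrow> 'k \<Rightarrow> 'k \<Rightarrow> 'k \<Rightarrow> 'k \<Rightarrow> bool" where
  "orthonormal_pair nv a11 a12 a21 a22 \<longleftrightarrow>
     (\<forall>b1 b2. max (nv (b1 * a11 + b2 * a21)) (nv (b1 * a12 + b2 * a22)) = max (nv b1) (nv b2))"

text \<open>A law mu on a space E (with addition add and scalar multiplication sm) is Q_p-Gaussian iff,
  for independent copies X1, X2 (whose joint law is mu x mu) and every orthonormal pair,
  the law of (a11 X1 + a12 X2, a21 X1 + a22 X2) equals the law of (X1, X2).\<close>
definition qgauss_law :: "('k::field_char_0 \<Rightarrow> real) \<Rightarrow> 'e measure \<Rightarrow> ('e \<Rightarrow> 'e \<Rightarrow> 'e)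
     \<Rightarrow> ('k \<Rightarrow> 'e \<Rightarrow> 'e) \<Rightarrow> 'e measure \<Rightarrow> bool" where
  "qgauss_law nv N add sm \<mu> \<longleftrightarrow>
     (\<forall>a11 a12 a21 a22. orthonormal_pair nv a11 a12 a21 a22 \<longrightarrow>
        distr (\<mu> \<Otimes>\<^sub>M \<mu>) (N \<Otimes>\<^sub>M N)
          (\<lambda>(x, y). (add (sm a11 x) (sm a12 y), add (sm a21 x) (sm a22 y))) = \<mu> \<Otimes>\<^sub>M \<mu>)"

definition C_add :: "('k::field_char_0 \<Rightarrow> 'k) \<Rightarrow> ('k \<Rightarrow> 'k) \<Rightarrow> 'k \<Rightarrow> 'k" where
  "C_add f g = (\<lambda>x. f x + g x)"

definition C_smult :: "'k::field_char_0 \<Rightarrow> ('k \<Rightarrow> 'k) \<Rightarrow> 'k \<Rightarrow> 'k" where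
  "C_smult c f = (\<lambda>x. c * f x)"

definition C_gaussian_rv :: "('k::field_char_0 \<Rightarrow> real) \<Rightarrow> 'w measure \<Rightarrow> ('w \<Rightarrow> 'k \<Rightarrow> 'k) \<Rightarrow> bool" where
  "C_gaussian_rv nv M X \<longleftrightarrow> X \<in> measurable M (Cborel nv) \<and>
     qgauss_law nv (Cborel nv) C_add C_smult (distr M (Cborel nv) X)"

definition K_gaussian_rv :: "('k::field_char_0 \<Rightarrow> real) \<Rightarrow> 'w measure \<Rightarrow> ('w \<Rightarrow> 'k) \<Rightarrow> bool" where
  "K_gaussian_rv nv M A \<longleftrightarrow> A \<in> measurable M (Kborel nv) \<and>
     qgauss_law nv (Kborel nv) (+) (*) (distr M (Kborel nv) A)"

definition C_shift :: "('k::field_char_0 \<Rightarrow> real) \<Rightarrow> 'k \<Rightarrow> ('k \<Rightarrow> 'k) \<Rightarrow> 'k \<Rightarrow> 'k" where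
  "C_shift nv s f = (\<lambda>x. if x \<in> Zp nv then f (x + s) else 0)"

definition C_stationary :: "('k::field_char_0 \<Rightarrow> real) \<Rightarrow> 'w measure \<Rightarrow> ('w \<Rightarrow> 'k \<Rightarrow> 'k) \<Rightarrow> bool" where
  "C_stationary nv M X \<longleftrightarrow>
     (\<forall>s\<in>Zp nv. distr M (Cborel nv) (\<lambda>\<omega>. C_shift nv s (X \<omega>)) = distr M (Cborel nv) X)"

definition series_repr :: "('k::field_char_0 \<Rightarrow> real) \<Rightarrow> 'w measure \<Rightarrow> ('w \<Rightarrow> 'k \<Rightarrow> 'k)
     \<Rightarrow> (nat \<Rightarrow> 'w \<Rightarrow> 'k) \<Rightarrow> (nat \<Rightarrow> 'k \<Rightarrow> 'k) \<Rightarrow> bool" where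
  "series_repr nv M X A f \<longleftrightarrow>
     (AE \<omega> in M. (\<lambda>N. supnorm nv (\<lambda>x. X \<omega> x - (\<Sum>n<N. A n \<omega> * f n x))) \<longlonglongrightarrow> 0)"

end

theory Submission
  imports Defs
begin

(* Let A, B be independent Haar-distributed variables on Z_p. For every continuous h the random
   function A + B h is Q_p-Gaussian, because an orthonormal pair acts on (Z_p^2)^2 preserving the
   Haar measure; for h = 0 and h(x) = x + c it is also stationary, a translation acting as a shear
   (A, B) -> (A + t B, B). Suppose an orthonormal basis (f_n) gave independent expansions. For A * 1
   the coefficients are A u_n, where 1 = sum u_n f_n; two non-zero u_n would make two independent
   coefficients determine the same event |A| <= 1/p of probability 1/p, so 1 = u f_m. Now choose c
   with x + c = sum w_n f_n and |w_m| > |u|. The m-th coefficient A u + B w_m of A + B (x + c)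
   satisfies |A u + B w_m| <= |u| iff |B| <= |u / w_m|, and so does a coefficient B w_n with n <> m,
   w_n <> 0, which exists as x + c is not constant: again an event independent of itself. *)

locale padic_field =
  fixes p :: nat and nv :: "'k::field_char_0 \<Rightarrow> real"
  assumes prime_p: "prime p" and is_Qp: "is_Qp p nv"
begin

section \<open>The \<open>p\<close>-adic absolute value\<close>

lemma nv_nonneg[simp]: "nv x \<ge> 0"
  using is_Qp by (simp add: is_Qp_def)

lemma nv_eq_0_iff[simp]: "nv x = 0 \<longleftrightarrow> x = 0"
  using is_Qp by (simp add: is_Qp_def)

lemma nv_mult: "nv (x * y) = nv x * nv y"
  using is_Qp by (simp add: is_Qp_def)

lemma nv_ultra: "nv (x + y) \<le> max (nv x) (nv y)"
  using is_Qp by (simp add: is_Qp_def)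

lemma nv_of_rat: "nv (of_rat q) = padic_abs p q"
  using is_Qp by (simp add: is_Qp_def)

lemma nv_complete:
  fixes s :: "nat \<Rightarrow> 'k"
  assumes "\<forall>e>0. \<exists>N. \<forall>m\<ge>N. \<forall>n\<ge>N. nv (s m - s n) < e"
  shows "\<exists>l. \<forall>e>0. \<exists>N. \<forall>n\<ge>N. nv (s n - l) < e"
  using is_Qp assms unfolding is_Qp_def by blast

lemma nv_dense: "e > 0 \<Longrightarrow> \<exists>q. nv (x - of_rat q) < e"
  using is_Qp by (simp add: is_Qp_def)

lemma p_gt_1: "p > 1"
  using prime_p prime_gt_1_nat by blast

lemma prime_int_p: "prime (int p)"
  using prime_p by simp

lemma nv_pos: "x \<noteq> 0 \<Longrightarrow> nv x > 0"
  using nv_nonneg[of x] nv_eq_0_iff[of x] by linarith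

lemma nv_0[simp]: "nv 0 = 0"
  by simp

lemma nv_1[simp]: "nv 1 = 1"
  using nv_mult[of 1 1] nv_pos[of 1] by simp

lemma nv_uminus[simp]: "nv (- x) = nv x"
proof -
  have "nv (-1) * nv (-1) = 1"
    using nv_mult[of "-1" "-1"] by simp
  hence "nv (-1) = 1"
    using nv_nonneg[of "-1"] by (simp add: power2_eq_1_iff flip: power2_eq_square)
  thus ?thesis
    using nv_mult[of "-1" x] by simp
qed

lemma nv_minus_commute: "nv (x - y) = nv (y - x)"
  by (metis minus_diff_eq nv_uminus)

lemma nv_inverse: "nv (inverse x) = inverse (nv x)"
proof (cases "x = 0")
  case False
  hence "nv (inverse x) * nv x = 1"
    using nv_mult[of "inverse x" x] by simp
  thus ?thesis
    by (metis inverse_unique mult.commute)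
qed simp

lemma nv_divide: "nv (x / y) = nv x / nv y"
  by (simp add: divide_inverse nv_mult nv_inverse)

lemma nv_ultra_diff: "nv (x - z) \<le> max (nv (x - y)) (nv (y - z))"
  using nv_ultra[of "x - y" "y - z"] by simp

lemma nv_add_le: "nv x \<le> r \<Longrightarrow> nv y \<le> r \<Longrightarrow> nv (x + y) \<le> r"
  using nv_ultra[of x y] by linarith

lemma nv_add_less: "nv x < r \<Longrightarrow> nv y < r \<Longrightarrow> nv (x + y) < r"
  using nv_ultra[of x y] by linarith

lemma nv_add_le_iff: "nv x \<le> r \<Longrightarrow> nv (x + y) \<le> r \<longleftrightarrow> nv y \<le> r"
  using nv_add_le[of x r y] nv_ultra_diff[of y 0 "- x"] by (auto simp: add.commute)

lemma nv_add_eq_left: "nv y < nv x \<Longrightarrow> nv (x + y) = nv x"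
  using nv_ultra[of x y] nv_ultra[of "x + y" "- y"] by simp

definition rad :: "nat \<Rightarrow> real" where
  "rad n = inverse (real p ^ n)"

lemma rad_pos: "rad n > 0"
  using p_gt_1 by (simp add: rad_def)

lemma rad_0[simp]: "rad 0 = 1"
  by (simp add: rad_def)

lemma rad_le_1: "rad n \<le> 1"
  using p_gt_1 by (simp add: rad_def inverse_le_1_iff)

lemma rad_mono: "m \<le> n \<Longrightarrow> rad n \<le> rad m"
  using p_gt_1 by (simp add: rad_def power_increasing)

lemma rad_strict_mono: "m < n \<Longrightarrow> rad n < rad m"
  using p_gt_1 by (simp add: rad_def power_strict_increasing)

lemma rad_less_1: "n > 0 \<Longrightarrow> rad n < 1"
  using rad_strict_mono[of 0 n] by simp

lemma rad_eventually_less: "e > 0 \<Longrightarrow> \<exists>n. rad n < e"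
proof -
  assume "e > 0"
  moreover have "inverse (real p) < 1"
    using p_gt_1 by (simp add: inverse_less_1_iff)
  ultimately obtain n where "inverse (real p) ^ n < e"
    using real_arch_pow_inv by blast
  thus ?thesis
    by (auto simp: rad_def power_inverse)
qed

lemma p_powr_minus_nat: "real p powr (- real k) = rad k"
  using p_gt_1 by (simp add: rad_def powr_minus powr_realpow)

lemma nv_of_int: "m \<noteq> 0 \<Longrightarrow> nv (of_int m) = rad (multiplicity (int p) m)"
  using nv_of_rat[of "of_int m"] by (simp add: padic_abs_def quotient_of_int p_powr_minus_nat)

lemma nv_of_int_le_rad_iff: "nv (of_int m) \<le> rad n \<longleftrightarrow> int p ^ n dvd m"
proof (cases "m = 0")
  case False
  have "int p ^ n dvd m \<longleftrightarrow> n \<le> multiplicity (int p) m"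
    using False prime_int_p by (metis multiplicity_dvd' multiplicity_geI not_prime_unit)
  also have "\<dots> \<longleftrightarrow> rad (multiplicity (int p) m) \<le> rad n"
    by (meson not_le rad_mono rad_strict_mono)
  finally show ?thesis
    using nv_of_int[OF False] by simp
qed (simp add: rad_pos less_imp_le)

lemma nv_of_int_le_1: "nv (of_int m) \<le> 1"
  using nv_of_int_le_rad_iff[of m 0] by simp

lemma nv_of_nat_le_1: "nv (of_nat m) \<le> 1"
  using nv_of_int_le_1[of "int m"] by simp

lemma nv_of_int_not_dvd: "\<not> int p dvd m \<Longrightarrow> nv (of_int m) = 1"
  by (cases "m = 0") (simp_all add: nv_of_int not_dvd_imp_multiplicity_0)

lemma nv_p_power: "nv (of_nat p ^ k :: 'k) = rad k"
proof -
  have "multiplicity (int p) (int p ^ k) = k"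
    using prime_p by simp
  thus ?thesis
    using nv_of_int[of "int p ^ k"] p_gt_1 by simp
qed

text \<open>A rational number within distance \<open>nv x\<close> of \<open>x\<close> has the same absolute value as \<open>x\<close>.\<close>

lemma nv_in_value_group:
  assumes "x \<noteq> 0"
  shows "\<exists>k::int. nv x = real p powr k"
proof -
  obtain q where q: "nv (x - of_rat q) < nv x"
    using nv_dense nv_pos[OF assms] by blast
  have "nv (of_rat q) = nv x"
    using nv_add_eq_left[of "- (x - of_rat q)" x] q by (simp add: nv_minus_commute)
  moreover obtain a b where ab: "quotient_of q = (a, b)"
    by fastforce
  moreover have "q \<noteq> 0"
    using q by auto
  ultimately have "nv x = real p powr (real (multiplicity (int p) b) - real (multiplicity (int p) a))"
    by (simp add: nv_of_rat padic_abs_def)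
  thus ?thesis
    by (metis of_int_diff of_int_of_nat_eq)
qed

lemma nv_eq_rad:
  assumes "x \<noteq> 0" "nv x \<le> 1"
  obtains k where "nv x = rad k"
proof -
  obtain k :: int where k: "nv x = real p powr k"
    using nv_in_value_group assms(1) by blast
  have "k \<le> 0"
  proof (rule ccontr)
    assume "\<not> k \<le> 0"
    hence "real p powr 0 < real p powr k"
      using p_gt_1 by (intro powr_less_mono) auto
    thus False
      using assms(2) k p_gt_1 by simp
  qed
  hence "nv x = real p powr (- real (nat (- k)))"
    using k by simp
  thus ?thesis
    using that p_powr_minus_nat by metis
qed

lemma quotient_of_denom_not_dvd:
  assumes ab: "quotient_of q = (a, b)" and q: "nv (of_rat q :: 'k) \<le> 1"
  shows "\<not> int p dvd b"
proof
  assume p_dvd_b: "int p dvd b"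
  hence "\<not> int p dvd a"
    using quotient_of_coprime[OF ab] prime_int_p by (metis coprime_common_divisor not_prime_unit)
  hence "nv (of_int a :: 'k) = 1"
    by (rule nv_of_int_not_dvd)
  moreover have "nv (of_int b :: 'k) \<le> rad 1"
    using nv_of_int_le_rad_iff[of b 1] p_dvd_b by simp
  ultimately have "nv (of_rat q :: 'k) > 1"
    using quotient_of_div[OF ab] quotient_of_denom_pos[OF ab] nv_pos[of "of_int b :: 'k"] rad_less_1[of 1]
    by (simp add: of_rat_divide nv_divide)
  thus False
    using q by simp
qed

lemma nv_fraction_approx_by_nat:
  assumes b: "b > 0" "\<not> int p dvd b"
  obtains r :: nat where "r < p ^ n" "nv (of_int a / of_int b - of_nat r :: 'k) \<le> rad n"
proof -
  have "coprime b (int p ^ n)"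
    using b(2) prime_int_p by (metis coprime_commute coprime_power_right_iff prime_imp_coprime)
  then obtain u v where uv: "u * b + v * int p ^ n = 1"
    using bezout_int[of b "int p ^ n"] by (auto simp: coprime_iff_gcd_eq_1)
  define k where "k = (a * u) mod (int p ^ n)"
  have k_bounds: "0 \<le> k" "k < int p ^ n"
    using p_gt_1 by (auto simp: k_def)
  have "int p ^ n dvd a * u - k"
    unfolding k_def by (simp add: mod_eq_dvd_iff[symmetric] mod_diff_eq[symmetric])
  moreover have "a - k * b = (a * u - k) * b + a * v * int p ^ n"
  proof -
    have "a = a * (u * b + v * int p ^ n)"
      using uv by simp
    thus ?thesis
      by (simp add: algebra_simps)
  qed
  ultimately have "int p ^ n dvd a - k * b"
    by (metis dvd_add dvd_mult2 dvd_triv_right)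
  hence "nv (of_int (a - k * b) :: 'k) \<le> rad n"
    using nv_of_int_le_rad_iff by blast
  hence "nv (of_int (a - k * b) / of_int b :: 'k) \<le> rad n"
    using nv_of_int_not_dvd[OF b(2)] by (simp add: nv_divide)
  moreover have "(of_int a / of_int b :: 'k) - of_int k = of_int (a - k * b) / of_int b"
    using b(1) by (simp add: field_simps)
  moreover have "(of_int k :: 'k) = of_nat (nat k)" "nat k < p ^ n"
    using k_bounds by (simp, metis nat_less_iff of_nat_power)
  ultimately show ?thesis
    using that by auto
qed

lemma nv_approx_by_nat:
  assumes "nv x \<le> 1"
  obtains r :: nat where "r < p ^ n" "nv (x - of_nat r) \<le> rad n"
proof -
  obtain q where q: "nv (x - of_rat q) < rad n"
    using nv_dense rad_pos by blast
  have "nv (of_rat q :: 'k) \<le> 1"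
    using nv_ultra_diff[of "of_rat q" 0 x] q rad_le_1[of n] assms by (simp add: nv_minus_commute)
  moreover obtain a b where ab: "quotient_of q = (a, b)"
    by fastforce
  ultimately obtain r :: nat where "r < p ^ n" "nv (of_int a / of_int b - of_nat r :: 'k) \<le> rad n"
    using nv_fraction_approx_by_nat quotient_of_denom_pos quotient_of_denom_not_dvd by metis
  moreover have "(of_rat q :: 'k) = of_int a / of_int b"
    using quotient_of_div[OF ab] by (simp add: of_rat_divide)
  ultimately show ?thesis
    using that nv_ultra_diff[of x "of_nat r" "of_rat q"] q by fastforce
qed

section \<open>Continuous functions on the unit ball\<close>

lemma in_Zp[simp]: "x \<in> Zp nv \<longleftrightarrow> nv x \<le> 1"
  by (simp add: Zp_def)

interpretation nv_metric: Metric_space UNIV "\<lambda>x y. nv (x - y)"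
proof
  fix x y z :: 'k
  show "nv (x - z) \<le> nv (x - y) + nv (y - z)"
    using nv_ultra_diff[of x z y] nv_nonneg[of "x - y"] nv_nonneg[of "y - z"] by linarith
qed (auto simp: nv_minus_commute)

lemma Zp_totally_bounded: "nv_metric.mtotally_bounded (Zp nv)"
  unfolding nv_metric.mtotally_bounded_def
proof (intro allI impI)
  fix e :: real
  assume "e > 0"
  then obtain n where n: "rad n < e"
    using rad_eventually_less by blast
  let ?K = "(of_nat :: nat \<Rightarrow> 'k) ` {..<p ^ n}"
  have "Zp nv \<subseteq> (\<Union>x\<in>?K. nv_metric.mball x e)"
  proof
    fix y
    assume "y \<in> Zp nv"
    then obtain r where "r < p ^ n" "nv (y - of_nat r) \<le> rad n"
      using nv_approx_by_nat by auto
    thus "y \<in> (\<Union>x\<in>?K. nv_metric.mball x e)"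
      using n by (force simp: nv_minus_commute)
  qed
  moreover have "?K \<subseteq> Zp nv"
    using nv_of_nat_le_1 by auto
  ultimately show "\<exists>K. finite K \<and> K \<subseteq> Zp nv \<and> Zp nv \<subseteq> (\<Union>x\<in>K. nv_metric.mball x e)"
    by blast
qed

lemma Zp_sequentially_compact:
  assumes "\<And>n. \<sigma> n \<in> Zp nv"
  obtains r :: "nat \<Rightarrow> nat" and l where "strict_mono r" "l \<in> Zp nv"
    "\<And>e. e > 0 \<Longrightarrow> \<exists>N. \<forall>n\<ge>N. nv (\<sigma> (r n) - l) < e"
proof -
  obtain r where r: "strict_mono r" "nv_metric.MCauchy (\<sigma> \<circ> r)"
    using Zp_totally_bounded assms unfolding nv_metric.mtotally_bounded_sequentially
    by (metis image_subsetI)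
  then obtain l where l: "\<forall>e>0. \<exists>N. \<forall>n\<ge>N. nv (\<sigma> (r n) - l) < e"
    using nv_complete[of "\<sigma> \<circ> r"] unfolding nv_metric.MCauchy_def by auto
  then obtain N where "nv (\<sigma> (r N) - l) < 1"
    by (meson order_refl zero_less_one)
  hence "l \<in> Zp nv"
    using nv_ultra_diff[of l 0 "\<sigma> (r N)"] assms[of "r N"] by (simp add: nv_minus_commute)
  thus ?thesis
    using that r(1) l by blast
qed

lemma CcarrierI:
  assumes "\<And>x e. x \<in> Zp nv \<Longrightarrow> e > 0 \<Longrightarrow> \<exists>d>0. \<forall>y\<in>Zp nv. nv (y - x) < d \<longrightarrow> nv (g y - g x) < e"
    and "\<And>x. x \<notin> Zp nv \<Longrightarrow> g x = 0"
  shows "g \<in> Ccarrier nv"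
  using assms unfolding Ccarrier_def by blast

lemma Ccarrier_continuous:
  "g \<in> Ccarrier nv \<Longrightarrow> x \<in> Zp nv \<Longrightarrow> e > 0 \<Longrightarrow>
     \<exists>d>0. \<forall>y\<in>Zp nv. nv (y - x) < d \<longrightarrow> nv (g y - g x) < e"
  unfolding Ccarrier_def by blast

lemma Ccarrier_outside: "g \<in> Ccarrier nv \<Longrightarrow> \<not> nv x \<le> 1 \<Longrightarrow> g x = 0"
  unfolding Ccarrier_def by simp

lemma Ccarrier_bounded:
  assumes g: "g \<in> Ccarrier nv"
  shows "\<exists>B. \<forall>x\<in>Zp nv. nv (g x) \<le> B"
proof (rule ccontr)
  assume "\<nexists>B. \<forall>x\<in>Zp nv. nv (g x) \<le> B"
  hence "\<forall>n::nat. \<exists>x. x \<in> Zp nv \<and> nv (g x) > real n"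
    by (meson not_le)
  then obtain \<sigma> where "\<forall>n. \<sigma> n \<in> Zp nv \<and> nv (g (\<sigma> n)) > real n"
    by (rule choice[THEN exE])
  hence \<sigma>: "\<And>n. \<sigma> n \<in> Zp nv" "\<And>n. nv (g (\<sigma> n)) > real n"
    by auto
  obtain r :: "nat \<Rightarrow> nat" and l where r: "strict_mono r" and l: "l \<in> Zp nv"
    and lim: "\<And>e. e > 0 \<Longrightarrow> \<exists>N. \<forall>n\<ge>N. nv (\<sigma> (r n) - l) < e"
    using Zp_sequentially_compact[of \<sigma>, OF \<sigma>(1)] by blast
  obtain d where d: "d > 0" "\<forall>y\<in>Zp nv. nv (y - l) < d \<longrightarrow> nv (g y - g l) < 1"
    using Ccarrier_continuous[OF g l, of 1] by auto
  obtain N where N: "\<forall>n\<ge>N. nv (\<sigma> (r n) - l) < d"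
    using lim[OF d(1)] by blast
  obtain n0 :: nat where n0: "real n0 > max 1 (nv (g l))"
    using reals_Archimedean2 by blast
  define n where "n = max N n0"
  have n: "n \<ge> N" "real n > max 1 (nv (g l))"
    using n0 unfolding n_def by auto
  have close: "nv (g (\<sigma> (r n)) - g l) < 1"
    using d(2) N n(1) \<sigma>(1) by blast
  have "nv (g (\<sigma> (r n))) \<le> max (nv (g (\<sigma> (r n)) - g l)) (nv (g l))"
    using nv_ultra[of "g (\<sigma> (r n)) - g l" "g l"] by simp
  also have "\<dots> \<le> max 1 (nv (g l))"
    using close by simp
  also have "\<dots> < real n"
    using n(2) .
  also have "\<dots> \<le> real (r n)"
    using strict_mono_imp_increasing[OF r] by simp
  finally show False
    using \<sigma>(2)[of "r n"] by simp
qed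

lemma Ccarrier_bdd_above: "g \<in> Ccarrier nv \<Longrightarrow> bdd_above ((\<lambda>x. nv (g x)) ` Zp nv)"
  using Ccarrier_bounded unfolding bdd_above_def by fast

lemma Ccarrier_add:
  assumes g: "g \<in> Ccarrier nv" and h: "h \<in> Ccarrier nv"
  shows "(\<lambda>x. g x + h x) \<in> Ccarrier nv"
proof (rule CcarrierI)
  fix x e
  assume x: "x \<in> Zp nv" and e: "(e::real) > 0"
  obtain d1 where d1: "d1 > 0" "\<forall>y\<in>Zp nv. nv (y - x) < d1 \<longrightarrow> nv (g y - g x) < e"
    using Ccarrier_continuous[OF g x e] by blast
  obtain d2 where d2: "d2 > 0" "\<forall>y\<in>Zp nv. nv (y - x) < d2 \<longrightarrow> nv (h y - h x) < e"
    using Ccarrier_continuous[OF h x e] by blast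
  have "nv ((g y + h y) - (g x + h x)) < e" if "y \<in> Zp nv" "nv (y - x) < min d1 d2" for y
    using nv_add_less[of "g y - g x" e "h y - h x"] d1 d2 that by (simp add: algebra_simps)
  thus "\<exists>d>0. \<forall>y\<in>Zp nv. nv (y - x) < d \<longrightarrow> nv ((g y + h y) - (g x + h x)) < e"
    using d1 d2 by (intro exI[of _ "min d1 d2"]) auto
qed (simp add: Ccarrier_outside g h)

lemma Ccarrier_smult:
  assumes g: "g \<in> Ccarrier nv"
  shows "(\<lambda>x. c * g x) \<in> Ccarrier nv"
proof (rule CcarrierI)
  fix x e
  assume x: "x \<in> Zp nv" and e: "(e::real) > 0"
  have "e / (nv c + 1) > 0"
    using e nv_nonneg[of c] by (intro divide_pos_pos) linarith+
  then obtain d where d: "d > 0" "\<forall>y\<in>Zp nv. nv (y - x) < d \<longrightarrow> nv (g y - g x) < e / (nv c + 1)"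
    using Ccarrier_continuous[OF g x] by blast
  have "nv (c * g y - c * g x) < e" if "y \<in> Zp nv" "nv (y - x) < d" for y
  proof -
    have "nv (c * g y - c * g x) = nv c * nv (g y - g x)"
      by (simp add: nv_mult right_diff_distrib[symmetric])
    also have "\<dots> \<le> (nv c + 1) * nv (g y - g x)"
      by (simp add: mult_right_mono)
    also have "\<dots> < e"
      using d that nv_nonneg[of c] by (simp add: less_divide_eq mult.commute add_pos_nonneg)
    finally show ?thesis .
  qed
  thus "\<exists>d>0. \<forall>y\<in>Zp nv. nv (y - x) < d \<longrightarrow> nv (c * g y - c * g x) < e"
    using d(1) by blast
qed (simp add: Ccarrier_outside g)

lemma Ccarrier_diff: "g \<in> Ccarrier nv \<Longrightarrow> h \<in> Ccarrier nv \<Longrightarrow> (\<lambda>x. g x - h x) \<in> Ccarrier nv"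
  using Ccarrier_add[of g "\<lambda>x. (-1) * h x"] Ccarrier_smult[of h "-1"] by simp

lemma Ccarrier_sum:
  assumes "finite I" "\<And>i. i \<in> I \<Longrightarrow> g i \<in> Ccarrier nv"
  shows "(\<lambda>x. \<Sum>i\<in>I. c i * g i x) \<in> Ccarrier nv"
  using assms
proof (induction I rule: finite_induct)
  case empty
  show ?case
    by (simp, rule CcarrierI) auto
next
  case (insert i I)
  thus ?case
    using Ccarrier_add[OF Ccarrier_smult] by simp
qed

definition const_one :: "'k \<Rightarrow> 'k" where
  "const_one x = (if x \<in> Zp nv then 1 else 0)"

definition id_plus :: "'k \<Rightarrow> 'k \<Rightarrow> 'k" where
  "id_plus c x = (if x \<in> Zp nv then x + c else 0)"

lemma const_one_Ccarrier: "const_one \<in> Ccarrier nv"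
  unfolding const_one_def by (rule CcarrierI) (auto intro: exI[of _ 1])

lemma id_plus_Ccarrier: "id_plus c \<in> Ccarrier nv"
  unfolding id_plus_def by (rule CcarrierI) auto

lemma Ccarrier_const_fun: "(\<lambda>x. a * const_one x) \<in> Ccarrier nv"
  using Ccarrier_smult[OF const_one_Ccarrier] .

lemma supnorm_upper: "g \<in> Ccarrier nv \<Longrightarrow> x \<in> Zp nv \<Longrightarrow> nv (g x) \<le> supnorm nv g"
  unfolding supnorm_def by (rule cSUP_upper) (auto simp: Ccarrier_bdd_above simp del: in_Zp)

lemma Zp_nonempty: "Zp nv \<noteq> {}"
  using in_Zp[of 0] by fastforce

lemma supnorm_least: "(\<And>x. x \<in> Zp nv \<Longrightarrow> nv (g x) \<le> r) \<Longrightarrow> supnorm nv g \<le> r"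
  unfolding supnorm_def using Zp_nonempty by (rule cSUP_least) auto

lemma supnorm_nonneg: "g \<in> Ccarrier nv \<Longrightarrow> supnorm nv g \<ge> 0"
  using supnorm_upper[of g 0] nv_nonneg[of "g 0"] by (simp del: nv_nonneg)

lemma supnorm_eq_0_imp: "g \<in> Ccarrier nv \<Longrightarrow> supnorm nv g = 0 \<Longrightarrow> x \<in> Zp nv \<Longrightarrow> g x = 0"
  using supnorm_upper[of g x] nv_nonneg[of "g x"] by simp

lemma supnorm_add_le:
  assumes "g \<in> Ccarrier nv" "h \<in> Ccarrier nv"
  shows "supnorm nv (\<lambda>x. g x + h x) \<le> max (supnorm nv g) (supnorm nv h)"
proof (rule supnorm_least)
  fix x
  assume "x \<in> Zp nv"
  thus "nv (g x + h x) \<le> max (supnorm nv g) (supnorm nv h)"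
    using nv_ultra[of "g x" "h x"] supnorm_upper[OF assms(1)] supnorm_upper[OF assms(2)]
    by (meson max.mono order_trans)
qed

lemma supnorm_ultra_diff:
  assumes "f \<in> Ccarrier nv" "g \<in> Ccarrier nv" "h \<in> Ccarrier nv"
  shows "supnorm nv (\<lambda>x. f x - h x) \<le> max (supnorm nv (\<lambda>x. f x - g x)) (supnorm nv (\<lambda>x. g x - h x))"
  using supnorm_add_le[OF Ccarrier_diff[OF assms(1,2)] Ccarrier_diff[OF assms(2,3)]] by simp

lemma supnorm_minus_commute: "supnorm nv (\<lambda>x. f x - g x) = supnorm nv (\<lambda>x. g x - f x)"
  unfolding supnorm_def by (simp add: nv_minus_commute)

lemma supnorm_smult:
  assumes g: "g \<in> Ccarrier nv"
  shows "supnorm nv (\<lambda>x. c * g x) = nv c * supnorm nv g"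
proof (cases "c = 0")
  case True
  thus ?thesis
    using supnorm_least[of "\<lambda>_. 0" 0] supnorm_nonneg[of "\<lambda>_. 0"] Ccarrier_smult[OF g, of 0] by simp
next
  case False
  have "supnorm nv (\<lambda>x. c * g x) \<le> nv c * supnorm nv g"
    by (rule supnorm_least) (simp add: nv_mult supnorm_upper[OF g] mult_left_mono)
  moreover have "supnorm nv g \<le> supnorm nv (\<lambda>x. c * g x) / nv c"
  proof (rule supnorm_least)
    fix x
    assume "x \<in> Zp nv"
    hence "nv c * nv (g x) \<le> supnorm nv (\<lambda>x. c * g x)"
      using supnorm_upper[OF Ccarrier_smult[OF g]] by (simp add: nv_mult)
    thus "nv (g x) \<le> supnorm nv (\<lambda>x. c * g x) / nv c"
      using nv_pos[OF False] by (simp add: pos_le_divide_eq mult.commute)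
  qed
  ultimately show ?thesis
    using nv_pos[OF False] by (simp add: pos_le_divide_eq mult.commute)
qed

section \<open>Borel sets and measurable maps\<close>

lemma space_Kborel[simp]: "space (Kborel nv) = UNIV"
  unfolding Kborel_def by (rule space_measure_of) auto

lemma sets_Kborel: "sets (Kborel nv) = sigma_sets UNIV (Collect (nv_open nv))"
  unfolding Kborel_def by (rule sets_measure_of) auto

lemma nv_open_sets: "nv_open nv U \<Longrightarrow> U \<in> sets (Kborel nv)"
  unfolding sets_Kborel by auto

definition Kball :: "'k \<Rightarrow> nat \<Rightarrow> 'k set" where
  "Kball c n = {y. nv (y - c) \<le> rad n}"

lemma Kball_diameter: "x \<in> Kball c n \<Longrightarrow> y \<in> Kball c n \<Longrightarrow> nv (y - x) \<le> rad n"
  unfolding Kball_def using nv_ultra_diff[of y x c] by (simp add: nv_minus_commute)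

lemma Kball_recenter: "c' \<in> Kball c n \<Longrightarrow> Kball c' n = Kball c n"
  unfolding Kball_def using nv_ultra_diff[of _ c c'] nv_ultra_diff[of _ c' c]
  by (auto simp: nv_minus_commute) (meson max.boundedI order_trans)+

lemma Kball_open: "nv_open nv (Kball c n)"
  unfolding nv_open_def
proof (intro ballI exI[of _ "rad n"] conjI allI impI rad_pos)
  fix x y
  assume "x \<in> Kball c n" "nv (y - x) < rad n"
  thus "y \<in> Kball c n"
    using nv_ultra_diff[of y c x] unfolding Kball_def by auto
qed

lemma Kball_sets: "Kball c n \<in> sets (Kborel nv)"
  by (rule nv_open_sets[OF Kball_open])

lemma rational_Kball_within:
  assumes "rad n < e"
  obtains q where "x \<in> Kball (of_rat q) n" "Kball (of_rat q) n \<subseteq> {y. nv (y - x) < e}"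
proof -
  obtain q where "nv (x - of_rat q) < rad n"
    using nv_dense rad_pos by blast
  hence "x \<in> Kball (of_rat q) n"
    unfolding Kball_def by simp
  moreover from this have "Kball (of_rat q) n \<subseteq> {y. nv (y - x) < e}"
    using Kball_diameter assms by fastforce
  ultimately show ?thesis
    using that by blast
qed

lemma sets_Kborel_Kball: "sets (Kborel nv) = sigma_sets UNIV (range (\<lambda>(c, n). Kball c n))"
  unfolding sets_Kborel
proof (rule sigma_sets_eqI)
  fix U
  assume "U \<in> Collect (nv_open nv)"
  hence U: "nv_open nv U"
    by simp
  define J where "J = {j :: rat \<times> nat. Kball (of_rat (fst j)) (snd j) \<subseteq> U}"
  have "U = (\<Union>j\<in>J. Kball (of_rat (fst j)) (snd j))"
  proof (intro equalityI subsetI)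
    fix x
    assume "x \<in> U"
    then obtain e where e: "e > 0" "\<forall>y. nv (y - x) < e \<longrightarrow> y \<in> U"
      using U unfolding nv_open_def by blast
    then obtain n where "rad n < e"
      using rad_eventually_less by blast
    then obtain q where q: "x \<in> Kball (of_rat q) n" "Kball (of_rat q) n \<subseteq> {y. nv (y - x) < e}"
      by (rule rational_Kball_within)
    hence "(q, n) \<in> J"
      using e(2) unfolding J_def by auto
    thus "x \<in> (\<Union>j\<in>J. Kball (of_rat (fst j)) (snd j))"
      using q(1) by (intro UN_I[of "(q, n)"]) auto
  qed (auto simp: J_def)
  also have "\<dots> \<in> sigma_sets UNIV (range (\<lambda>(c, n). Kball c n))"
  proof (rule sigma_sets_UNION)
    show "countable ((\<lambda>j. Kball (of_rat (fst j)) (snd j)) ` J)"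
      by (intro countable_image countable_subset[of J UNIV]) auto
  qed (auto intro!: image_eqI[of _ _ "(of_rat _, _)"])
  finally show "U \<in> sigma_sets UNIV (range (\<lambda>(c, n). Kball c n))" .
qed (auto intro: Kball_open)

definition K2_open :: "('k \<times> 'k) set \<Rightarrow> bool" where
  "K2_open W \<longleftrightarrow>
     (\<forall>a b. (a, b) \<in> W \<longrightarrow> (\<exists>e>0. \<forall>a' b'. nv (a' - a) < e \<longrightarrow> nv (b' - b) < e \<longrightarrow> (a', b') \<in> W))"

lemma K2_open_sets:
  assumes W: "K2_open W"
  shows "W \<in> sets (Kborel nv \<Otimes>\<^sub>M Kborel nv)"
proof -
  define B where "B = (\<lambda>(q1::rat, q2::rat, n::nat). Kball (of_rat q1) n \<times> Kball (of_rat q2) n)"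
  define J where "J = {j. B j \<subseteq> W}"
  have "W = (\<Union>j\<in>J. B j)"
  proof (intro equalityI subsetI)
    fix z
    assume "z \<in> W"
    then obtain a b e where z: "z = (a, b)" and e: "e > 0"
      and near: "\<forall>a' b'. nv (a' - a) < e \<longrightarrow> nv (b' - b) < e \<longrightarrow> (a', b') \<in> W"
      using W unfolding K2_open_def by (cases z) blast
    obtain n where n: "rad n < e"
      using rad_eventually_less[OF e] by blast
    obtain q1 where q1: "a \<in> Kball (of_rat q1) n" "Kball (of_rat q1) n \<subseteq> {y. nv (y - a) < e}"
      using rational_Kball_within[OF n] by blast
    obtain q2 where q2: "b \<in> Kball (of_rat q2) n" "Kball (of_rat q2) n \<subseteq> {y. nv (y - b) < e}"
      using rational_Kball_within[OF n] by blast
    have "B (q1, q2, n) \<subseteq> W"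
      using q1(2) q2(2) near unfolding B_def by blast
    thus "z \<in> (\<Union>j\<in>J. B j)"
      using z q1(1) q2(1) unfolding J_def B_def by blast
  qed (auto simp: J_def)
  also have "\<dots> \<in> sets (Kborel nv \<Otimes>\<^sub>M Kborel nv)"
    by (intro sets.countable_UN'' countable_subset[of J UNIV])
       (auto simp: B_def intro: Kball_sets)
  finally show ?thesis .
qed

lemma space_Cborel: "space (Cborel nv) = Ccarrier nv"
  unfolding Cborel_def by (rule space_measure_of) (auto simp: C_open_def)

lemma sets_Cborel: "sets (Cborel nv) = sigma_sets (Ccarrier nv) (Collect (C_open nv))"
  unfolding Cborel_def by (rule sets_measure_of) (auto simp: C_open_def)

lemma measurable_CborelI:
  assumes "F \<in> space M \<rightarrow> Ccarrier nv"
    and "\<And>U. C_open nv U \<Longrightarrow> F -` U \<inter> space M \<in> sets M"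
  shows "F \<in> measurable M (Cborel nv)"
  unfolding Cborel_def by (rule measurable_measure_of) (use assms in \<open>auto simp: C_open_def\<close>)

definition C_ball :: "('k \<Rightarrow> 'k) \<Rightarrow> real \<Rightarrow> ('k \<Rightarrow> 'k) set" where
  "C_ball d r = {h \<in> Ccarrier nv. supnorm nv (\<lambda>x. h x - d x) < r}"

lemma C_ball_sets:
  assumes d: "d \<in> Ccarrier nv"
  shows "C_ball d r \<in> sets (Cborel nv)"
proof -
  have "C_open nv (C_ball d r)"
    unfolding C_open_def
  proof (intro conjI ballI)
    fix g
    assume "g \<in> C_ball d r"
    hence g: "g \<in> Ccarrier nv" "supnorm nv (\<lambda>x. g x - d x) < r"
      unfolding C_ball_def by auto
    have "supnorm nv (\<lambda>x. h x - d x) < r"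
      if "h \<in> Ccarrier nv" "supnorm nv (\<lambda>x. h x - g x) < r" for h
      using supnorm_ultra_diff[OF that(1) g(1) d] that(2) g(2) by simp
    moreover have "r > 0"
      using supnorm_nonneg[OF Ccarrier_diff[OF g(1) d]] g(2) by linarith
    ultimately show "\<exists>e>0. \<forall>h\<in>Ccarrier nv. supnorm nv (\<lambda>x. h x - g x) < e \<longrightarrow> h \<in> C_ball d r"
      unfolding C_ball_def by blast
  qed (auto simp: C_ball_def)
  thus ?thesis
    unfolding sets_Cborel by (rule sigma_sets.Basic[OF CollectI])
qed

definition C_separable :: bool where
  "C_separable \<longleftrightarrow> (\<exists>D. countable D \<and> D \<subseteq> Ccarrier nv \<and>
     (\<forall>g\<in>Ccarrier nv. \<forall>e>0. \<exists>d\<in>D. supnorm nv (\<lambda>x. g x - d x) < e))"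

definition C2_open :: "(('k \<Rightarrow> 'k) \<times> ('k \<Rightarrow> 'k)) set \<Rightarrow> bool" where
  "C2_open W \<longleftrightarrow> W \<subseteq> Ccarrier nv \<times> Ccarrier nv \<and>
     (\<forall>g h. (g, h) \<in> W \<longrightarrow> (\<exists>e>0. \<forall>g'\<in>Ccarrier nv. \<forall>h'\<in>Ccarrier nv.
        supnorm nv (\<lambda>x. g' x - g x) < e \<longrightarrow> supnorm nv (\<lambda>x. h' x - h x) < e \<longrightarrow> (g', h') \<in> W))"

lemma C_ball_dense_within:
  assumes "D \<subseteq> Ccarrier nv" "\<forall>g\<in>Ccarrier nv. \<forall>e>0. \<exists>d\<in>D. supnorm nv (\<lambda>x. g x - d x) < e"
    and g: "g \<in> Ccarrier nv" and r: "r > 0"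
  obtains d where "d \<in> D" "g \<in> C_ball d r"
    "\<And>g'. g' \<in> C_ball d r \<Longrightarrow> supnorm nv (\<lambda>x. g' x - g x) < r"
proof -
  obtain d where d: "d \<in> D" "supnorm nv (\<lambda>x. g x - d x) < r"
    using assms(2) g r by blast
  have "supnorm nv (\<lambda>x. g' x - g x) < r" if "g' \<in> C_ball d r" for g'
  proof -
    have "g' \<in> Ccarrier nv" "supnorm nv (\<lambda>x. g' x - d x) < r"
      using that unfolding C_ball_def by auto
    moreover have "d \<in> Ccarrier nv"
      using d(1) assms(1) by blast
    ultimately show ?thesis
      using supnorm_ultra_diff[of g' d g] g d(2) supnorm_minus_commute[of d g] by simp
  qed
  thus ?thesis
    using that d g unfolding C_ball_def by blast
qed

lemma C2_open_sets:
  assumes "C_separable" and W: "C2_open W"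
  shows "W \<in> sets (Cborel nv \<Otimes>\<^sub>M Cborel nv)"
proof -
  obtain D where D: "countable D" "D \<subseteq> Ccarrier nv"
    "\<forall>g\<in>Ccarrier nv. \<forall>e>0. \<exists>d\<in>D. supnorm nv (\<lambda>x. g x - d x) < e"
    using assms(1) unfolding C_separable_def by blast
  define B where "B = (\<lambda>(d1, d2, n). C_ball d1 (rad n) \<times> C_ball d2 (rad n))"
  define J where "J = {(d1, d2, n). d1 \<in> D \<and> d2 \<in> D \<and> B (d1, d2, n) \<subseteq> W}"
  have "W = (\<Union>j\<in>J. B j)"
  proof (intro equalityI subsetI)
    fix z
    assume "z \<in> W"
    then obtain g h e where z: "z = (g, h)" and gh: "g \<in> Ccarrier nv" "h \<in> Ccarrier nv"
      and e: "e > 0" and near: "\<forall>g'\<in>Ccarrier nv. \<forall>h'\<in>Ccarrier nv.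
        supnorm nv (\<lambda>x. g' x - g x) < e \<longrightarrow> supnorm nv (\<lambda>x. h' x - h x) < e \<longrightarrow> (g', h') \<in> W"
      using W unfolding C2_open_def by (cases z) blast
    obtain n where n: "rad n < e"
      using rad_eventually_less[OF e] by blast
    obtain d1 where d1: "d1 \<in> D" "g \<in> C_ball d1 (rad n)"
      "\<And>g'. g' \<in> C_ball d1 (rad n) \<Longrightarrow> supnorm nv (\<lambda>x. g' x - g x) < rad n"
      using C_ball_dense_within[OF D(2,3) gh(1) rad_pos] by blast
    obtain d2 where d2: "d2 \<in> D" "h \<in> C_ball d2 (rad n)"
      "\<And>h'. h' \<in> C_ball d2 (rad n) \<Longrightarrow> supnorm nv (\<lambda>x. h' x - h x) < rad n"
      using C_ball_dense_within[OF D(2,3) gh(2) rad_pos] by blast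
    have "B (d1, d2, n) \<subseteq> W"
    proof (clarsimp simp: B_def)
      fix g' h'
      assume "g' \<in> C_ball d1 (rad n)" "h' \<in> C_ball d2 (rad n)"
      thus "(g', h') \<in> W"
        using near d1(3) d2(3) n unfolding C_ball_def by force
    qed
    thus "z \<in> (\<Union>j\<in>J. B j)"
      using z d1 d2 unfolding J_def B_def by blast
  qed (auto simp: J_def)
  also have "\<dots> \<in> sets (Cborel nv \<Otimes>\<^sub>M Cborel nv)"
  proof (rule sets.countable_UN'')
    show "countable J"
      using D(1) by (intro countable_subset[of J "D \<times> D \<times> UNIV"]) (auto simp: J_def)
  qed (use D(2) in \<open>auto simp: J_def B_def intro: C_ball_sets\<close>)
  finally show ?thesis .
qed

lemma K2_to_C_measurable:
  assumes F: "\<And>a b. F (a, b) \<in> Ccarrier nv"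
    and cont: "\<And>a b e. e > 0 \<Longrightarrow> \<exists>d>0. \<forall>a' b'. nv (a' - a) < d \<longrightarrow> nv (b' - b) < d \<longrightarrow>
       supnorm nv (\<lambda>x. F (a', b') x - F (a, b) x) < e"
  shows "F \<in> measurable (Kborel nv \<Otimes>\<^sub>M Kborel nv) (Cborel nv)"
proof (rule measurable_CborelI)
  fix U
  assume U: "C_open nv U"
  have "K2_open (F -` U)"
    unfolding K2_open_def
  proof (intro allI impI)
    fix a b
    assume "(a, b) \<in> F -` U"
    then obtain e where e: "e > 0" "\<forall>k\<in>Ccarrier nv. supnorm nv (\<lambda>x. k x - F (a, b) x) < e \<longrightarrow> k \<in> U"
      using U unfolding C_open_def by auto
    moreover obtain d where "d > 0" "\<forall>a' b'. nv (a' - a) < d \<longrightarrow> nv (b' - b) < d \<longrightarrow>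
        supnorm nv (\<lambda>x. F (a', b') x - F (a, b) x) < e"
      using cont[OF e(1)] by blast
    ultimately show "\<exists>e>0. \<forall>a' b'. nv (a' - a) < e \<longrightarrow> nv (b' - b) < e \<longrightarrow> (a', b') \<in> F -` U"
      using F by blast
  qed
  thus "F -` U \<inter> space (Kborel nv \<Otimes>\<^sub>M Kborel nv) \<in> sets (Kborel nv \<Otimes>\<^sub>M Kborel nv)"
    by (simp add: K2_open_sets space_pair_measure)
qed (use F in auto)

lemma C2_to_C_measurable:
  assumes "C_separable"
    and F: "\<And>g h. g \<in> Ccarrier nv \<Longrightarrow> h \<in> Ccarrier nv \<Longrightarrow> F (g, h) \<in> Ccarrier nv"
    and cont: "\<And>g h e. g \<in> Ccarrier nv \<Longrightarrow> h \<in> Ccarrier nv \<Longrightarrow> e > 0 \<Longrightarrow>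
       \<exists>d>0. \<forall>g'\<in>Ccarrier nv. \<forall>h'\<in>Ccarrier nv. supnorm nv (\<lambda>x. g' x - g x) < d \<longrightarrow>
         supnorm nv (\<lambda>x. h' x - h x) < d \<longrightarrow> supnorm nv (\<lambda>x. F (g', h') x - F (g, h) x) < e"
  shows "F \<in> measurable (Cborel nv \<Otimes>\<^sub>M Cborel nv) (Cborel nv)"
proof (rule measurable_CborelI)
  fix U
  assume U: "C_open nv U"
  have "C2_open (F -` U \<inter> (Ccarrier nv \<times> Ccarrier nv))"
    unfolding C2_open_def
  proof (intro conjI allI impI)
    fix g h
    assume gh: "(g, h) \<in> F -` U \<inter> (Ccarrier nv \<times> Ccarrier nv)"
    then obtain e where e: "e > 0" "\<forall>k\<in>Ccarrier nv. supnorm nv (\<lambda>x. k x - F (g, h) x) < e \<longrightarrow> k \<in> U"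
      using U unfolding C_open_def by auto
    moreover obtain d where "d > 0" "\<forall>g'\<in>Ccarrier nv. \<forall>h'\<in>Ccarrier nv.
        supnorm nv (\<lambda>x. g' x - g x) < d \<longrightarrow> supnorm nv (\<lambda>x. h' x - h x) < d \<longrightarrow>
        supnorm nv (\<lambda>x. F (g', h') x - F (g, h) x) < e"
      using cont[of g h e] gh e(1) by blast
    ultimately show "\<exists>e>0. \<forall>g'\<in>Ccarrier nv. \<forall>h'\<in>Ccarrier nv. supnorm nv (\<lambda>x. g' x - g x) < e \<longrightarrow>
        supnorm nv (\<lambda>x. h' x - h x) < e \<longrightarrow> (g', h') \<in> F -` U \<inter> (Ccarrier nv \<times> Ccarrier nv)"
      using F by blast
  qed auto
  thus "F -` U \<inter> space (Cborel nv \<Otimes>\<^sub>M Cborel nv) \<in> sets (Cborel nv \<Otimes>\<^sub>M Cborel nv)"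
    using C2_open_sets[OF assms(1)] by (simp add: space_pair_measure space_Cborel)
qed (use F in \<open>auto simp: space_pair_measure space_Cborel\<close>)

lemma orthonormal_pair_coeffs:
  assumes "orthonormal_pair nv a11 a12 a21 a22"
  shows "nv a11 \<le> 1" "nv a12 \<le> 1" "nv a21 \<le> 1" "nv a22 \<le> 1"
    and "nv (a11 * a22 - a12 * a21) = 1"
proof -
  note onp = assms[unfolded orthonormal_pair_def, rule_format]
  have rows: "max (nv a11) (nv a12) = 1" "max (nv a21) (nv a22) = 1"
    using onp[of 1 0] onp[of 0 1] by simp_all
  thus le: "nv a11 \<le> 1" "nv a12 \<le> 1" "nv a21 \<le> 1" "nv a22 \<le> 1"
    by linarith+
  have "nv (a11 * a22 - a12 * a21) = max (nv a22) (nv a12)"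
    using onp[of a22 "- a12"] by (simp add: algebra_simps)
  moreover have "nv (a11 * a22 - a12 * a21) = max (nv a21) (nv a11)"
    using onp[of "- a21" a11] by (simp add: algebra_simps)
  ultimately show "nv (a11 * a22 - a12 * a21) = 1"
    using rows le by (simp add: max_def split: if_splits)
qed

lemma C_lincomb_measurable:
  assumes "C_separable" and a: "nv a \<le> 1" and b: "nv b \<le> 1"
  shows "(\<lambda>z. C_add (C_smult a (fst z)) (C_smult b (snd z))) \<in> measurable (Cborel nv \<Otimes>\<^sub>M Cborel nv) (Cborel nv)"
proof (rule C2_to_C_measurable[OF assms(1)])
  fix g h
  assume g: "g \<in> Ccarrier nv" and h: "h \<in> Ccarrier nv"
  show "C_add (C_smult a (fst (g, h))) (C_smult b (snd (g, h))) \<in> Ccarrier nv"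
    unfolding C_add_def C_smult_def using Ccarrier_add[OF Ccarrier_smult[OF g] Ccarrier_smult[OF h]] by simp
  fix e :: real
  assume "e > 0"
  have "supnorm nv (\<lambda>x. C_add (C_smult a (fst (g', h'))) (C_smult b (snd (g', h'))) x -
           C_add (C_smult a (fst (g, h))) (C_smult b (snd (g, h))) x) < e"
    if g': "g' \<in> Ccarrier nv" and h': "h' \<in> Ccarrier nv"
      and close: "supnorm nv (\<lambda>x. g' x - g x) < e" "supnorm nv (\<lambda>x. h' x - h x) < e" for g' h'
  proof -
    have dg: "(\<lambda>x. g' x - g x) \<in> Ccarrier nv" and dh: "(\<lambda>x. h' x - h x) \<in> Ccarrier nv"
      using Ccarrier_diff g h g' h' by blast+
    have "supnorm nv (\<lambda>x. a * (g' x - g x) + b * (h' x - h x))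
        \<le> max (nv a * supnorm nv (\<lambda>x. g' x - g x)) (nv b * supnorm nv (\<lambda>x. h' x - h x))"
      using supnorm_add_le[OF Ccarrier_smult[OF dg] Ccarrier_smult[OF dh]]
      by (simp add: supnorm_smult[OF dg] supnorm_smult[OF dh])
    also have "\<dots> < e"
      using close a b supnorm_nonneg[OF dg] supnorm_nonneg[OF dh]
      by (simp add: mult_le_one order_le_less_trans[OF mult_left_le_one_le])
    finally show ?thesis
      unfolding C_add_def C_smult_def by (simp add: algebra_simps)
  qed
  thus "\<exists>d>0. \<forall>g'\<in>Ccarrier nv. \<forall>h'\<in>Ccarrier nv. supnorm nv (\<lambda>x. g' x - g x) < d \<longrightarrow>
      supnorm nv (\<lambda>x. h' x - h x) < d \<longrightarrow>
      supnorm nv (\<lambda>x. C_add (C_smult a (fst (g', h'))) (C_smult b (snd (g', h'))) x -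
        C_add (C_smult a (fst (g, h))) (C_smult b (snd (g, h))) x) < e"
    using \<open>e > 0\<close> by blast
qed

lemma C_orthonormal_map_measurable:
  assumes "C_separable" and "orthonormal_pair nv a11 a12 a21 a22"
  shows "(\<lambda>(x, y). (C_add (C_smult a11 x) (C_smult a12 y), C_add (C_smult a21 x) (C_smult a22 y)))
     \<in> measurable (Cborel nv \<Otimes>\<^sub>M Cborel nv) (Cborel nv \<Otimes>\<^sub>M Cborel nv)"
  using C_lincomb_measurable[OF assms(1)] orthonormal_pair_coeffs[OF assms(2)]
  by (simp add: case_prod_beta')

definition affine_fn :: "('k \<Rightarrow> 'k) \<Rightarrow> 'k \<times> 'k \<Rightarrow> 'k \<Rightarrow> 'k" where
  "affine_fn h z x = fst z * const_one x + snd z * h x"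

lemma affine_fn_Ccarrier: "h \<in> Ccarrier nv \<Longrightarrow> affine_fn h z \<in> Ccarrier nv"
  unfolding affine_fn_def by (intro Ccarrier_add Ccarrier_smult const_one_Ccarrier)

lemma affine_fn_measurable:
  assumes h: "h \<in> Ccarrier nv"
  shows "affine_fn h \<in> measurable (Kborel nv \<Otimes>\<^sub>M Kborel nv) (Cborel nv)"
proof (rule K2_to_C_measurable)
  fix a b and e :: real
  assume e: "e > 0"
  define m where "m = supnorm nv h + 1"
  have m: "m > 0" "supnorm nv h \<le> m" "1 \<le> m"
    using supnorm_nonneg[OF h] unfolding m_def by linarith+
  have "supnorm nv (\<lambda>x. affine_fn h (a', b') x - affine_fn h (a, b) x) < e"
    if a': "nv (a' - a) < e / m" and b': "nv (b' - b) < e / m" for a' b'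
  proof -
    have "supnorm nv (\<lambda>x. affine_fn h (a', b') x - affine_fn h (a, b) x) \<le> max (nv (a' - a)) (nv (b' - b) * m)"
    proof (rule supnorm_least)
      fix x
      assume x: "x \<in> Zp nv"
      have "nv ((b' - b) * h x) \<le> nv (b' - b) * m"
        using supnorm_upper[OF h x] m(2) by (simp add: nv_mult mult_left_mono)
      moreover have "affine_fn h (a', b') x - affine_fn h (a, b) x = (a' - a) + (b' - b) * h x"
        using x by (simp add: affine_fn_def const_one_def algebra_simps)
      ultimately show "nv (affine_fn h (a', b') x - affine_fn h (a, b) x) \<le> max (nv (a' - a)) (nv (b' - b) * m)"
        using nv_ultra[of "a' - a" "(b' - b) * h x"] by simp
    qed
    also have "\<dots> < e"
    proof -
      have "e / m \<le> e"
        using divide_left_mono[of 1 m e] e m by simp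
      moreover have "nv (b' - b) * m < e"
        using b' m(1) by (simp add: pos_less_divide_eq)
      ultimately show ?thesis
        using a' by simp
    qed
    finally show ?thesis .
  qed
  thus "\<exists>d>0. \<forall>a' b'. nv (a' - a) < d \<longrightarrow> nv (b' - b) < d \<longrightarrow>
      supnorm nv (\<lambda>x. affine_fn h (a', b') x - affine_fn h (a, b) x) < e"
    using e m(1) by (intro exI[of _ "e / m"]) auto
qed (rule affine_fn_Ccarrier[OF h])

end

section \<open>Haar measure on the unit ball\<close>

lemma digit_expansion:
  fixes p r :: nat
  assumes "p > 0" "r < p ^ n"
  shows "(\<Sum>k<n. (r div p ^ k mod p) * p ^ k) = r"
  using assms(2)
proof (induction n arbitrary: r)
  case (Suc n)
  have "r div p < p ^ n"
    using Suc.prems assms(1) by (simp add: div_less_iff_less_mult mult.commute)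
  hence IH: "(\<Sum>k<n. (r div p div p ^ k mod p) * p ^ k) = r div p"
    by (rule Suc.IH)
  have "(\<Sum>k<Suc n. (r div p ^ k mod p) * p ^ k) = r mod p + (\<Sum>k<n. (r div p ^ Suc k mod p) * p ^ Suc k)"
    by (subst sum.lessThan_Suc_shift) simp
  also have "(\<Sum>k<n. (r div p ^ Suc k mod p) * p ^ Suc k) = p * (\<Sum>k<n. (r div p div p ^ k mod p) * p ^ k)"
    by (simp add: sum_distrib_left div_mult2_eq mult_ac)
  finally show ?case
    using IH by simp
qed simp

lemma digit_sum_split:
  fixes p :: nat
  shows "(\<Sum>k<Suc n. w k * p ^ k) = w 0 + p * (\<Sum>k<n. w (Suc k) * p ^ k)"
  by (subst sum.lessThan_Suc_shift) (simp add: sum_distrib_left mult_ac)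

lemma digit_sum_less:
  fixes p :: nat
  shows "(\<And>k. k < n \<Longrightarrow> w k < p) \<Longrightarrow> (\<Sum>k<n. w k * p ^ k) < p ^ n"
proof (induction n arbitrary: w)
  case (Suc n)
  have IH: "(\<Sum>k<n. w (Suc k) * p ^ k) < p ^ n"
    using Suc.prems by (intro Suc.IH) auto
  have "p * (\<Sum>k<n. w (Suc k) * p ^ k) + p \<le> p ^ Suc n"
    using mult_le_mono2[of "Suc (\<Sum>k<n. w (Suc k) * p ^ k)" "p ^ n" p] IH by simp
  thus ?case
    using Suc.prems[of 0] digit_sum_split[of w p n] by simp
qed simp

lemma digit_sum_digit:
  fixes p :: nat
  shows "(\<And>k. k < n \<Longrightarrow> w k < p) \<Longrightarrow> k < n \<Longrightarrow> (\<Sum>j<n. w j * p ^ j) div p ^ k mod p = w k"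
proof (induction n arbitrary: w k)
  case (Suc n)
  have w0: "w 0 < p"
    using Suc.prems by auto
  show ?case
  proof (cases k)
    case 0
    thus ?thesis
      using digit_sum_split[of w p n] w0 by simp
  next
    case (Suc k')
    have "(\<Sum>j<Suc n. w j * p ^ j) div p ^ k = (\<Sum>j<n. w (Suc j) * p ^ j) div p ^ k'"
      using digit_sum_split[of w p n] w0 Suc by (simp add: div_mult2_eq)
    also have "\<dots> mod p = w (Suc k')"
      using Suc.prems Suc by (intro Suc.IH) auto
    finally show ?thesis
      using Suc by simp
  qed
qed simp

context padic_field
begin

text \<open>The Haar measure is the law of \<open>\<Sum>\<^sub>k w\<^sub>k p\<^sup>k\<close> for independent uniformly distributed
  digits \<open>w\<^sub>k \<in> {0..<p}\<close>.\<close>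

definition digit_sum :: "(nat \<Rightarrow> nat) \<Rightarrow> nat \<Rightarrow> 'k" where
  "digit_sum w n = of_nat (\<Sum>k<n. w k * p ^ k)"

definition digit_limit :: "(nat \<Rightarrow> nat) \<Rightarrow> 'k" where
  "digit_limit w = (SOME l. \<forall>e>0. \<exists>N. \<forall>n\<ge>N. nv (digit_sum w n - l) < e)"

lemma digit_sum_cauchy: "n \<le> m \<Longrightarrow> nv (digit_sum w m - digit_sum w n) \<le> rad n"
proof (induction m rule: dec_induct)
  case base
  thus ?case
    using rad_pos[of n] by simp
next
  case (step m)
  have small: "nv (of_nat (w m) * of_nat p ^ m :: 'k) \<le> rad n"
    using mult_left_le_one_le[OF less_imp_le[OF rad_pos[of m]] nv_nonneg nv_of_nat_le_1[of "w m"]]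
      rad_mono[OF step(1)]
    by (simp add: nv_mult nv_p_power)
  have step_eq: "digit_sum w (Suc m) - digit_sum w n = (digit_sum w m - digit_sum w n) + of_nat (w m) * of_nat p ^ m"
    unfolding digit_sum_def by simp
  show ?case
    unfolding step_eq by (rule nv_add_le[OF step(3) small])
qed

lemma digit_limit_tendsto: "\<forall>e>0. \<exists>N. \<forall>n\<ge>N. nv (digit_sum w n - digit_limit w) < e"
proof -
  have "\<exists>N. \<forall>m\<ge>N. \<forall>n\<ge>N. nv (digit_sum w m - digit_sum w n) < e" if e: "e > 0" for e
  proof -
    obtain N where N: "rad N < e"
      using rad_eventually_less[OF e] by blast
    have "nv (digit_sum w m - digit_sum w n) < e" if "m \<ge> N" "n \<ge> N" for m n
      using digit_sum_cauchy[of "min m n" "max m n" w] rad_mono[of N "min m n"] N that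
      by (cases "m \<le> n") (auto simp: nv_minus_commute min_def max_def)
    thus ?thesis
      by blast
  qed
  hence "\<exists>l. \<forall>e>0. \<exists>N. \<forall>n\<ge>N. nv (digit_sum w n - l) < e"
    by (intro nv_complete) blast
  thus ?thesis
    unfolding digit_limit_def by (rule someI_ex)
qed

lemma digit_limit_approx: "nv (digit_limit w - digit_sum w n) \<le> rad n"
proof (rule field_le_epsilon)
  fix e :: real
  assume "e > 0"
  then obtain N where N: "\<forall>n\<ge>N. nv (digit_sum w n - digit_limit w) < e"
    using digit_limit_tendsto by blast
  define m where "m = max N n"
  have "nv (digit_limit w - digit_sum w n) \<le> max (nv (digit_limit w - digit_sum w m)) (nv (digit_sum w m - digit_sum w n))"
    by (rule nv_ultra_diff)
  also have "\<dots> \<le> max e (rad n)"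
    using N[rule_format, of m] digit_sum_cauchy[of n m w] unfolding m_def
    by (intro max.mono) (auto simp: nv_minus_commute)
  also have "\<dots> \<le> rad n + e"
    using \<open>e > 0\<close> rad_pos[of n] by simp
  finally show "nv (digit_limit w - digit_sum w n) \<le> rad n + e" .
qed

lemma digit_limit_in_Zp: "nv (digit_limit w) \<le> 1"
  using digit_limit_approx[of w 0] by (simp add: digit_sum_def)

lemma digit_limit_in_Kball_iff: "digit_limit w \<in> Kball c n \<longleftrightarrow> digit_sum w n \<in> Kball c n"
proof -
  have "digit_limit w \<in> Kball (digit_sum w n) n"
    using digit_limit_approx[of w n] by (simp add: Kball_def)
  thus ?thesis
    using Kball_recenter[of "digit_limit w" "digit_sum w n" n] Kball_recenter[of _ c n]
    by (metis Kball_def mem_Collect_eq nv_0 diff_self)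
qed

definition digit_measure :: "nat measure" where
  "digit_measure = uniform_count_measure {0..<p}"

definition digits_measure :: "(nat \<Rightarrow> nat) measure" where
  "digits_measure = PiM UNIV (\<lambda>_. digit_measure)"

lemma prob_space_digit_measure: "prob_space digit_measure"
  unfolding digit_measure_def using p_gt_1 by (intro prob_space_uniform_count_measure) auto

lemma prob_space_digits_measure: "prob_space digits_measure"
  unfolding digits_measure_def using prob_space_digit_measure by (intro prob_space_PiM) auto

lemma space_digits_measure: "space digits_measure = {w. \<forall>k. w k < p}"
  unfolding digits_measure_def space_PiM digit_measure_def space_uniform_count_measure
  by (auto simp: PiE_def Pi_def extensional_def)

lemma of_nat_in_Kball_iff:
  assumes "s < p ^ n" "r < p ^ n"
  shows "(of_nat s :: 'k) \<in> Kball (of_nat r) n \<longleftrightarrow> s = r"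
proof
  assume "(of_nat s :: 'k) \<in> Kball (of_nat r) n"
  hence "int p ^ n dvd int s - int r"
    using nv_of_int_le_rad_iff[of "int s - int r" n] by (simp add: Kball_def)
  moreover have "\<bar>int s - int r\<bar> < int p ^ n"
    using assms by (simp add: abs_less_iff flip: of_nat_power)
  ultimately show "s = r"
    using dvd_imp_le_int[of "int s - int r" "int p ^ n"] by fastforce
qed (simp add: Kball_def rad_pos less_imp_le)

lemma digit_limit_in_Kball_nat_iff:
  assumes w: "\<And>k. w k < p" and r: "r < p ^ n"
  shows "digit_limit w \<in> Kball (of_nat r) n \<longleftrightarrow> (\<forall>k<n. w k = r div p ^ k mod p)"
proof -
  have "digit_limit w \<in> Kball (of_nat r) n \<longleftrightarrow> (\<Sum>k<n. w k * p ^ k) = r"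
    unfolding digit_limit_in_Kball_iff digit_sum_def using of_nat_in_Kball_iff digit_sum_less w r by blast
  also have "\<dots> \<longleftrightarrow> (\<forall>k<n. w k = r div p ^ k mod p)"
  proof
    assume "(\<Sum>k<n. w k * p ^ k) = r"
    thus "\<forall>k<n. w k = r div p ^ k mod p"
      using w by (metis digit_sum_digit)
  next
    assume "\<forall>k<n. w k = r div p ^ k mod p"
    thus "(\<Sum>k<n. w k * p ^ k) = r"
      using digit_expansion[of p r n] p_gt_1 r by simp
  qed
  finally show ?thesis .
qed

lemma digit_limit_preimage_Kball:
  assumes c: "nv c \<le> 1"
  obtains dg where "\<And>k. dg k < p"
    "{w \<in> space digits_measure. digit_limit w \<in> Kball c n} =
       prod_emb UNIV (\<lambda>_. digit_measure) {..<n} (PiE {..<n} (\<lambda>k. {dg k}))"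
proof -
  obtain r where r: "r < p ^ n" "nv (c - of_nat r) \<le> rad n"
    using nv_approx_by_nat[OF c] by blast
  define dg where "dg k = r div p ^ k mod p" for k
  have "Kball c n = Kball (of_nat r) n"
    using r(2) by (intro Kball_recenter[symmetric]) (simp add: Kball_def nv_minus_commute)
  hence "{w \<in> space digits_measure. digit_limit w \<in> Kball c n} = {w \<in> space digits_measure. \<forall>k<n. w k = dg k}"
    unfolding space_digits_measure dg_def using digit_limit_in_Kball_nat_iff[OF _ r(1)] by auto
  also have "\<dots> = prod_emb UNIV (\<lambda>_. digit_measure) {..<n} (PiE {..<n} (\<lambda>k. {dg k}))"
    by (auto simp: prod_emb_iff space_digits_measure digit_measure_def space_uniform_count_measure PiE_iff)
  moreover have "dg k < p" for k
    unfolding dg_def using p_gt_1 by simp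
  ultimately show ?thesis
    using that by blast
qed

lemma digit_limit_preimage_Kball_outside:
  assumes "nv c > 1"
  shows "{w \<in> space digits_measure. digit_limit w \<in> Kball c n} = {}"
proof -
  have "nv (digit_limit w - c) = nv c" for w
    using nv_add_eq_left[of "digit_limit w" "- c"] digit_limit_in_Zp[of w] assms by simp
  thus ?thesis
    using assms rad_le_1[of n] unfolding Kball_def by auto
qed

lemma digit_limit_measurable: "digit_limit \<in> measurable digits_measure (Kborel nv)"
proof (rule measurable_sigma_sets[OF sets_Kborel_Kball])
  fix X
  assume "X \<in> range (\<lambda>(c, n). Kball c n)"
  then obtain c n where X: "X = Kball c n"
    by auto
  have "{w \<in> space digits_measure. digit_limit w \<in> Kball c n} \<in> sets digits_measure"
  proof (cases "nv c \<le> 1")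
    case True
    then obtain dg where "\<And>k. dg k < p"
      "{w \<in> space digits_measure. digit_limit w \<in> Kball c n} =
         prod_emb UNIV (\<lambda>_. digit_measure) {..<n} (PiE {..<n} (\<lambda>k. {dg k}))"
      using digit_limit_preimage_Kball[of c n] by blast
    thus ?thesis
      unfolding digits_measure_def
      by (simp, intro sets_PiM_I) (auto simp: digit_measure_def sets_uniform_count_measure)
  qed (simp add: digit_limit_preimage_Kball_outside)
  thus "digit_limit -` X \<inter> space digits_measure \<in> sets digits_measure"
    unfolding X by (simp add: Int_def conj_commute vimage_def)
qed auto

definition haar :: "'k measure" where
  "haar = distr digits_measure (Kborel nv) digit_limit"

lemma prob_space_haar: "prob_space haar"
  unfolding haar_def
  using prob_space_digits_measure digit_limit_measurable by (rule prob_space.prob_space_distr)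

lemma sets_haar: "sets haar = sets (Kborel nv)"
  by (simp add: haar_def)

lemma space_haar[simp]: "space haar = UNIV"
  by (simp add: haar_def)

lemma emeasure_haar_Kball: "emeasure haar (Kball c n) = (if nv c \<le> 1 then ennreal (rad n) else 0)"
proof -
  have "emeasure haar (Kball c n) = emeasure digits_measure {w \<in> space digits_measure. digit_limit w \<in> Kball c n}"
    unfolding haar_def using digit_limit_measurable Kball_sets
    by (subst emeasure_distr) (auto simp: vimage_def Int_def conj_commute)
  also have "\<dots> = (if nv c \<le> 1 then ennreal (rad n) else 0)"
  proof (cases "nv c \<le> 1")
    case True
    then obtain dg where dg: "\<And>k. dg k < p"
      "{w \<in> space digits_measure. digit_limit w \<in> Kball c n} =
         prod_emb UNIV (\<lambda>_. digit_measure) {..<n} (PiE {..<n} (\<lambda>k. {dg k}))"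
      using digit_limit_preimage_Kball[of c n] by blast
    have "emeasure digits_measure (prod_emb UNIV (\<lambda>_. digit_measure) {..<n} (PiE {..<n} (\<lambda>k. {dg k})))
        = (\<Prod>k<n. emeasure digit_measure {dg k})"
      unfolding digits_measure_def using prob_space_digit_measure dg(1)
      by (intro emeasure_PiM_emb) (auto simp: digit_measure_def sets_uniform_count_measure)
    also have "\<dots> = (\<Prod>k<n. ennreal (1 / real p))"
      using dg(1) p_gt_1
      by (intro prod.cong refl)
         (simp add: digit_measure_def emeasure_uniform_count_measure ennreal_of_nat_eq_real_of_nat divide_ennreal)
    also have "\<dots> = ennreal (rad n)"
      by (simp add: ennreal_power rad_def power_one_over inverse_eq_divide)
    finally show ?thesis
      using dg(2) True by simp
  qed (simp add: digit_limit_preimage_Kball_outside)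
  finally show ?thesis .
qed

end

section \<open>Invariance of the Haar measure under orthonormal maps\<close>

text \<open>Both \<open>K\<close> and \<open>K\<^sup>2\<close> with their Haar measures are instances. An orthonormal pair induces
  an isometry of \<open>V\<^sup>2\<close>, which maps boxes of balls to boxes of balls of the same radius and hence
  preserves \<open>P \<Otimes> P\<close> on this intersection-stable generator.\<close>

locale uniform_ball_measure = padic_field p nv for p :: nat and nv :: "'k::field_char_0 \<Rightarrow> real" +
  fixes Nm :: "'v::ab_group_add \<Rightarrow> real" and sm :: "'k \<Rightarrow> 'v \<Rightarrow> 'v"
    and P :: "'v measure" and D :: "'v set" and ball_measure :: "nat \<Rightarrow> ennreal"
  assumes Nm_ultra: "Nm (x + y) \<le> max (Nm x) (Nm y)"
    and Nm_sm: "Nm (sm a x) = nv a * Nm x"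
    and sm_add_right: "sm a (x + y) = sm a x + sm a y"
    and sm_add_left: "sm (a + b) x = sm a x + sm b x"
    and sm_sm: "sm a (sm b x) = sm (a * b) x"
    and sm_one: "sm 1 x = x"
    and countable_D: "countable D"
    and D_dense: "\<exists>d\<in>D. Nm (x - d) \<le> rad n"
    and sets_P: "sets P = sigma_sets UNIV (range (\<lambda>(c, n). {y. Nm (y - c) \<le> rad n}))"
    and space_P: "space P = UNIV"
    and prob_space_P: "prob_space P"
    and emeasure_P_ball: "emeasure P {y. Nm (y - c) \<le> rad n} = (if Nm c \<le> 1 then ball_measure n else 0)"
begin

lemma sm_zero_left: "sm 0 x = 0"
  using sm_add_left[of 0 0 x] by simp

lemma sm_diff_right: "sm a (x - y) = sm a x - sm a y"
  using sm_add_right[of a "x - y" y] by (simp add: algebra_simps)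

lemma Nm_zero: "Nm 0 = 0"
  using Nm_sm[of 0 0] sm_zero_left[of 0] by simp

lemma Nm_uminus: "Nm (- x) = Nm x"
proof -
  have "sm (-1) x = - x"
    using sm_add_left[of 1 "-1" x] sm_zero_left[of x] sm_one[of x] by (simp add: eq_neg_iff_add_eq_0 add.commute)
  thus ?thesis
    using Nm_sm[of "-1" x] by simp
qed

lemma Nm_minus_commute: "Nm (x - y) = Nm (y - x)"
  using Nm_uminus[of "x - y"] by simp

lemma Nm_nonneg: "Nm x \<ge> 0"
  using Nm_ultra[of x "- x"] Nm_zero Nm_uminus[of x] by simp

lemma Nm_ultra_diff: "Nm (x - z) \<le> max (Nm (x - y)) (Nm (y - z))"
  using Nm_ultra[of "x - y" "y - z"] by simp

lemma Nm_lincomb_le: "nv b1 \<le> 1 \<Longrightarrow> nv b2 \<le> 1 \<Longrightarrow> Nm (sm b1 x + sm b2 y) \<le> max (Nm x) (Nm y)"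
  using Nm_ultra[of "sm b1 x" "sm b2 y"] mult_left_le_one_le[OF Nm_nonneg, of "nv b1" x]
    mult_left_le_one_le[OF Nm_nonneg, of "nv b2" y]
  by (simp add: Nm_sm max_def split: if_splits)

definition vball :: "'v \<Rightarrow> nat \<Rightarrow> 'v set" where
  "vball c n = {y. Nm (y - c) \<le> rad n}"

lemma vball_sets: "vball c n \<in> sets P"
  unfolding sets_P vball_def by (rule sigma_sets.Basic) auto

lemma vball_nested: "m \<le> n \<Longrightarrow> y \<in> vball c n \<Longrightarrow> y \<in> vball c' m \<Longrightarrow> vball c n \<subseteq> vball c' m"
  unfolding vball_def using rad_mono[of m n] Nm_ultra_diff[of _ c' y] Nm_ultra_diff[of _ y c]
  by (auto simp: Nm_minus_commute) (meson max.boundedI order_trans)+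

lemma vball_Int: "m \<le> n \<Longrightarrow> vball c n \<inter> vball c' m = {} \<or> vball c n \<inter> vball c' m = vball c n"
  using vball_nested by blast

lemma vball_cover: "(\<Union>d\<in>D. vball d n) = UNIV"
  using D_dense unfolding vball_def by blast

lemma vball_refine: "m \<le> n \<Longrightarrow> vball c m = (\<Union>d\<in>{d\<in>D. vball d n \<subseteq> vball c m}. vball d n)"
proof (intro equalityI subsetI)
  fix y
  assume mn: "m \<le> n" and y: "y \<in> vball c m"
  obtain d where d: "d \<in> D" "y \<in> vball d n"
    using vball_cover by blast
  thus "y \<in> (\<Union>d\<in>{d\<in>D. vball d n \<subseteq> vball c m}. vball d n)"
    using vball_nested[OF mn d(2) y] by blast
qed auto

definition boxes :: "('v \<times> 'v) set set" where
  "boxes = range (\<lambda>(c, c', n). vball c n \<times> vball c' n)"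

lemma boxesE:
  assumes "X \<in> boxes"
  obtains c c' n where "X = vball c n \<times> vball c' n"
proof -
  obtain t where "X = (\<lambda>(c, c', n). vball c n \<times> vball c' n) t"
    using assms unfolding boxes_def by blast
  moreover obtain c c' n where "t = (c, c', n)"
    by (cases t) blast
  ultimately show ?thesis
    using that by simp
qed

lemma sigma_algebra_boxes: "sigma_algebra UNIV (sigma_sets UNIV boxes)"
  by (rule sigma_algebra_sigma_sets) simp

lemma vball_Times_in_boxes: "vball c n \<times> vball c' m \<in> sigma_sets UNIV boxes"
proof -
  interpret S: sigma_algebra UNIV "sigma_sets UNIV boxes"
    by (rule sigma_algebra_boxes)
  have basic: "vball d k \<times> vball d' k \<in> sigma_sets UNIV boxes" for d d' k
    unfolding boxes_def by (rule sigma_sets.Basic) auto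
  have countable: "countable {d \<in> D. P' d}" for P'
    using countable_D by (rule countable_subset[rotated]) auto
  show ?thesis
  proof (cases "n \<le> m")
    case True
    have "vball c n \<times> vball c' m = (\<Union>d\<in>{d\<in>D. vball d m \<subseteq> vball c n}. vball d m \<times> vball c' m)"
      using vball_refine[OF True, of c] by blast
    also have "\<dots> \<in> sigma_sets UNIV boxes"
      using countable basic by (intro S.countable_UN'') auto
    finally show ?thesis .
  next
    case False
    have "vball c n \<times> vball c' m = (\<Union>d\<in>{d\<in>D. vball d n \<subseteq> vball c' m}. vball c n \<times> vball d n)"
      using vball_refine[of m n c'] False by auto
    also have "\<dots> \<in> sigma_sets UNIV boxes"
      using countable basic by (intro S.countable_UN'') auto
    finally show ?thesis .
  qed
qed

lemma Times_vball_in_boxes: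
  assumes "a \<in> sets P"
  shows "a \<times> vball c' m \<in> sigma_sets UNIV boxes"
proof -
  interpret S: sigma_algebra UNIV "sigma_sets UNIV boxes"
    by (rule sigma_algebra_boxes)
  have "UNIV \<times> vball c' m = (\<Union>d\<in>D. vball d 0 \<times> vball c' m)"
    using vball_cover by blast
  also have "\<dots> \<in> sigma_sets UNIV boxes"
    using countable_D vball_Times_in_boxes by (intro S.countable_UN'') auto
  finally have UNIV_Times: "UNIV \<times> vball c' m \<in> sigma_sets UNIV boxes" .
  have "a \<in> sigma_sets UNIV (range (\<lambda>(c, n). vball c n))"
    using assms sets_P unfolding vball_def by simp
  thus ?thesis
  proof (induction rule: sigma_sets.induct)
    case (Compl a)
    have "(UNIV - a) \<times> vball c' m = (UNIV \<times> vball c' m) - (a \<times> vball c' m)"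
      by blast
    thus ?case
      using UNIV_Times Compl.IH by (simp add: S.Diff)
  next
    case (Union A)
    have "(\<Union>i. A i) \<times> vball c' m = (\<Union>i. A i \<times> vball c' m)"
      by blast
    thus ?case
      using Union.IH by (simp add: sigma_sets.Union)
  qed (use vball_Times_in_boxes in auto)
qed

lemma Times_in_boxes:
  assumes a: "a \<in> sets P" and b: "b \<in> sets P"
  shows "a \<times> b \<in> sigma_sets UNIV boxes"
proof -
  interpret S: sigma_algebra UNIV "sigma_sets UNIV boxes"
    by (rule sigma_algebra_boxes)
  have "a \<times> UNIV = (\<Union>d\<in>D. a \<times> vball d 0)"
    using vball_cover by blast
  also have "\<dots> \<in> sigma_sets UNIV boxes"
    using countable_D Times_vball_in_boxes[OF a] by (intro S.countable_UN'') auto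
  finally have Times_UNIV: "a \<times> UNIV \<in> sigma_sets UNIV boxes" .
  have "b \<in> sigma_sets UNIV (range (\<lambda>(c, n). vball c n))"
    using b sets_P unfolding vball_def by simp
  thus ?thesis
  proof (induction rule: sigma_sets.induct)
    case (Compl b)
    have "a \<times> (UNIV - b) = (a \<times> UNIV) - (a \<times> b)"
      by blast
    thus ?case
      using Times_UNIV Compl.IH by (simp add: S.Diff)
  next
    case (Union B)
    have "a \<times> (\<Union>i. B i) = (\<Union>i. a \<times> B i)"
      by blast
    thus ?case
      using Union.IH by (simp add: sigma_sets.Union)
  qed (use Times_vball_in_boxes[OF a] in auto)
qed

lemma sets_pair_P: "sets (P \<Otimes>\<^sub>M P) = sigma_sets UNIV boxes"
proof
  interpret S: sigma_algebra UNIV "sigma_sets UNIV boxes"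
    by (rule sigma_algebra_boxes)
  show "sets (P \<Otimes>\<^sub>M P) \<subseteq> sigma_sets UNIV boxes"
    unfolding sets_pair_measure space_P UNIV_Times_UNIV
    using Times_in_boxes by (intro S.sigma_sets_subset) auto
  show "sigma_sets UNIV boxes \<subseteq> sets (P \<Otimes>\<^sub>M P)"
  proof (rule sets.sigma_sets_subset')
    show "boxes \<subseteq> sets (P \<Otimes>\<^sub>M P)"
      unfolding boxes_def by (auto intro!: vball_sets)
    show "UNIV \<in> sets (P \<Otimes>\<^sub>M P)"
      using sets.top[of "P \<Otimes>\<^sub>M P"] by (simp add: space_pair_measure space_P)
  qed
qed

definition Nm2 :: "'v \<times> 'v \<Rightarrow> real" where
  "Nm2 z = max (Nm (fst z)) (Nm (snd z))"

lemma vball_Times_eq: "vball c n \<times> vball c' n = {z. Nm2 (z - (c, c')) \<le> rad n}"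
  unfolding vball_def Nm2_def by auto

definition lin2 :: "'k \<Rightarrow> 'k \<Rightarrow> 'k \<Rightarrow> 'k \<Rightarrow> 'v \<times> 'v \<Rightarrow> 'v \<times> 'v" where
  "lin2 b11 b12 b21 b22 z = (sm b11 (fst z) + sm b12 (snd z), sm b21 (fst z) + sm b22 (snd z))"

lemma lin2_diff: "lin2 b11 b12 b21 b22 (z - w) = lin2 b11 b12 b21 b22 z - lin2 b11 b12 b21 b22 w"
  unfolding lin2_def by (simp add: sm_diff_right algebra_simps)

lemma lin2_lin2:
  "lin2 a11 a12 a21 a22 (lin2 b11 b12 b21 b22 z) =
     lin2 (a11 * b11 + a12 * b21) (a11 * b12 + a12 * b22) (a21 * b11 + a22 * b21) (a21 * b12 + a22 * b22) z"
  unfolding lin2_def by (simp add: sm_add_right sm_add_left sm_sm algebra_simps)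

lemma lin2_id: "lin2 1 0 0 1 z = z"
  unfolding lin2_def by (simp add: sm_one sm_zero_left)

lemma Nm2_lin2_le:
  "nv b11 \<le> 1 \<Longrightarrow> nv b12 \<le> 1 \<Longrightarrow> nv b21 \<le> 1 \<Longrightarrow> nv b22 \<le> 1 \<Longrightarrow> Nm2 (lin2 b11 b12 b21 b22 z) \<le> Nm2 z"
  unfolding Nm2_def lin2_def using Nm_lincomb_le by simp

lemma emeasure_pair_P_box:
  "emeasure (P \<Otimes>\<^sub>M P) (vball c n \<times> vball c' n) =
     (if Nm2 (c, c') \<le> 1 then ball_measure n * ball_measure n else 0)"
proof -
  interpret prob_space P
    by (rule prob_space_P)
  have "emeasure (P \<Otimes>\<^sub>M P) (vball c n \<times> vball c' n) = emeasure P (vball c n) * emeasure P (vball c' n)"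
    by (intro emeasure_pair_measure_Times vball_sets)
  thus ?thesis
    using emeasure_P_ball[of c n] emeasure_P_ball[of c' n] by (simp add: Nm2_def vball_def)
qed

lemma boxes_Int_stable: "Int_stable (insert {} boxes)"
  unfolding Int_stable_def
proof (intro ballI)
  fix X Y
  assume X: "X \<in> insert {} boxes" and Y: "Y \<in> insert {} boxes"
  show "X \<inter> Y \<in> insert {} boxes"
  proof (cases "X = {} \<or> Y = {}")
    case False
    have "X \<in> boxes" "Y \<in> boxes"
      using X Y False by auto
    then obtain c c' n e e' m where X': "X = vball c n \<times> vball c' n" and Y': "Y = vball e m \<times> vball e' m"
      by (metis boxesE)
    note XY = X' Y'
    have "X \<inter> Y = {} \<or> X \<inter> Y = X \<or> X \<inter> Y = Y"
    proof (cases "m \<le> n")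
      case True
      thus ?thesis
        using vball_Int[OF True, of c e] vball_Int[OF True, of c' e'] XY by blast
    next
      case False
      thus ?thesis
        using vball_Int[of n m e c] vball_Int[of n m e' c'] XY by auto
    qed
    thus ?thesis
      using X Y by auto
  qed auto
qed

lemma vball_Times_cover: "\<Union> ((\<lambda>(d, d'). vball d n \<times> vball d' n) ` (D \<times> D)) = UNIV"
proof -
  have "z \<in> \<Union> ((\<lambda>(d, d'). vball d n \<times> vball d' n) ` (D \<times> D))" for z
  proof -
    obtain d d' where "d \<in> D" "fst z \<in> vball d n" "d' \<in> D" "snd z \<in> vball d' n"
      using vball_cover[of n] by blast
    thus ?thesis
      by (intro UnionI[of "vball d n \<times> vball d' n"]) (auto simp: mem_Times_iff)
  qed
  thus ?thesis
    by blast
qed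

context
  fixes a11 a12 a21 a22 :: 'k
  assumes orthonormal: "orthonormal_pair nv a11 a12 a21 a22"
begin

definition det :: 'k where
  "det = a11 * a22 - a12 * a21"

lemma nv_det: "nv det = 1"
  unfolding det_def using orthonormal_pair_coeffs[OF orthonormal] by simp

definition T :: "'v \<times> 'v \<Rightarrow> 'v \<times> 'v" where
  "T = lin2 a11 a12 a21 a22"

definition T_inv :: "'v \<times> 'v \<Rightarrow> 'v \<times> 'v" where
  "T_inv = lin2 (a22 / det) (- a12 / det) (- a21 / det) (a11 / det)"

lemma T_T_inv: "T (T_inv z) = z"
proof -
  have "det \<noteq> 0"
    using nv_det by auto
  hence "(a11 * a22 - a12 * a21) / det = 1"
    by (simp add: det_def)
  hence "a11 * (a22 / det) + a12 * (- a21 / det) = 1" "a11 * (- a12 / det) + a12 * (a11 / det) = 0"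
    "a21 * (a22 / det) + a22 * (- a21 / det) = 0" "a21 * (- a12 / det) + a22 * (a11 / det) = 1"
    by (simp_all add: diff_divide_distrib mult.commute)
  thus ?thesis
    unfolding T_def T_inv_def lin2_lin2 by (simp add: lin2_id)
qed

lemma T_inv_T: "T_inv (T z) = z"
proof -
  have "det \<noteq> 0"
    using nv_det by auto
  hence "(a11 * a22 - a12 * a21) / det = 1"
    by (simp add: det_def)
  hence "a22 / det * a11 + - a12 / det * a21 = 1" "a22 / det * a12 + - a12 / det * a22 = 0"
    "- a21 / det * a11 + a11 / det * a21 = 0" "- a21 / det * a12 + a11 / det * a22 = 1"
    by (simp_all add: diff_divide_distrib mult.commute)
  thus ?thesis
    unfolding T_def T_inv_def lin2_lin2 by (simp add: lin2_id)
qed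

lemma Nm2_T: "Nm2 (T z) = Nm2 z"
proof -
  have T_le: "Nm2 (T w) \<le> Nm2 w" for w
    unfolding T_def using orthonormal_pair_coeffs[OF orthonormal] by (intro Nm2_lin2_le) auto
  have "Nm2 (T_inv w) \<le> Nm2 w" for w
    unfolding T_inv_def using orthonormal_pair_coeffs[OF orthonormal] nv_det
    by (intro Nm2_lin2_le) (auto simp: nv_divide)
  thus ?thesis
    using T_le[of z] T_inv_T[of z] by (metis antisym)
qed

lemma T_vimage_box:
  "T -` (vball c n \<times> vball c' n) = vball (fst (T_inv (c, c'))) n \<times> vball (snd (T_inv (c, c'))) n"
proof -
  have "T z - (c, c') = T (z - T_inv (c, c'))" for z
    using T_T_inv[of "(c, c')"] by (simp add: T_def lin2_diff)
  hence "Nm2 (T z - (c, c')) = Nm2 (z - T_inv (c, c'))" for z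
    by (simp add: Nm2_T)
  hence "T -` {z. Nm2 (z - (c, c')) \<le> rad n} = {z. Nm2 (z - T_inv (c, c')) \<le> rad n}"
    by auto
  thus ?thesis
    using vball_Times_eq[of "fst (T_inv (c, c'))" n "snd (T_inv (c, c'))"] by (simp add: vball_Times_eq)
qed

lemma T_measurable: "T \<in> measurable (P \<Otimes>\<^sub>M P) (P \<Otimes>\<^sub>M P)"
proof (rule measurable_sigma_sets[OF sets_pair_P])
  fix X
  assume "X \<in> boxes"
  then obtain c c' n where "X = vball c n \<times> vball c' n"
    unfolding boxes_def by auto
  thus "T -` X \<inter> space (P \<Otimes>\<^sub>M P) \<in> sets (P \<Otimes>\<^sub>M P)"
    by (simp add: T_vimage_box space_pair_measure space_P vball_sets)
qed auto

lemma emeasure_T_vimage_box: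
  "emeasure (P \<Otimes>\<^sub>M P) (T -` (vball c n \<times> vball c' n) \<inter> space (P \<Otimes>\<^sub>M P)) =
     emeasure (P \<Otimes>\<^sub>M P) (vball c n \<times> vball c' n)"
  using Nm2_T[of "T_inv (c, c')"] T_T_inv[of "(c, c')"]
  by (simp add: T_vimage_box space_pair_measure space_P emeasure_pair_P_box)

lemma distr_T: "distr (P \<Otimes>\<^sub>M P) (P \<Otimes>\<^sub>M P) T = P \<Otimes>\<^sub>M P"
proof -
  interpret prob_space "P \<Otimes>\<^sub>M P"
    by (intro prob_space_pair prob_space_P)
  have sets_eq: "sets (P \<Otimes>\<^sub>M P) = sigma_sets UNIV (insert {} boxes)"
    unfolding sets_pair_P by (rule sigma_sets_eqI) (auto intro: sigma_sets.Empty)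
  let ?A = "(\<lambda>(d, d'). vball d 0 \<times> vball d' 0) ` (D \<times> D)"
  show ?thesis
  proof (rule measure_eqI_generator_eq_countable[OF boxes_Int_stable _ _ _ _ _ _ countable_image])
    show "sets (distr (P \<Otimes>\<^sub>M P) (P \<Otimes>\<^sub>M P) T) = sigma_sets UNIV (insert {} boxes)"
      "sets (P \<Otimes>\<^sub>M P) = sigma_sets UNIV (insert {} boxes)"
      using sets_eq by simp_all
    show "?A \<subseteq> insert {} boxes"
      unfolding boxes_def by auto
    show "\<Union> ?A = UNIV"
      by (rule vball_Times_cover)
    show "countable (D \<times> D)"
      using countable_D by simp
  next
    fix X
    assume "X \<in> insert {} boxes"
    then consider "X = {}" | c c' n where "X = vball c n \<times> vball c' n"
      unfolding boxes_def by auto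
    thus "emeasure (distr (P \<Otimes>\<^sub>M P) (P \<Otimes>\<^sub>M P) T) X = emeasure (P \<Otimes>\<^sub>M P) X"
    proof cases
      case (2 c c' n)
      thus ?thesis
        using emeasure_T_vimage_box[of c n c'] by (simp add: emeasure_distr T_measurable vball_sets)
    qed simp
  next
    fix X
    assume "X \<in> ?A"
    show "emeasure (distr (P \<Otimes>\<^sub>M P) (P \<Otimes>\<^sub>M P) T) X \<noteq> \<infinity>"
      using prob_space_distr[OF T_measurable] by (simp add: prob_space_def finite_measure.emeasure_finite)
  qed auto
qed

end

end

context padic_field
begin

lemma uniform_ball_measure_haar:
  "uniform_ball_measure p nv nv (*) haar (range of_rat) (\<lambda>n. ennreal (rad n))"
proof (intro uniform_ball_measure.intro uniform_ball_measure_axioms.intro padic_field_axioms)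
  show "\<exists>d\<in>range of_rat. nv (x - d) \<le> rad n" for x n
    using nv_dense[OF rad_pos[of n], of x] by (auto intro: less_imp_le)
  show "sets haar = sigma_sets UNIV (range (\<lambda>(c, n). {y. nv (y - c) \<le> rad n}))"
    using sets_haar sets_Kborel_Kball unfolding Kball_def by simp
  show "emeasure haar {y. nv (y - c) \<le> rad n} = (if nv c \<le> 1 then ennreal (rad n) else 0)" for c n
    using emeasure_haar_Kball[of c n] unfolding Kball_def by simp
qed (simp_all add: nv_ultra nv_mult distrib_left distrib_right prob_space_haar)

lemma distr_haar_orthonormal:
  assumes "orthonormal_pair nv a11 a12 a21 a22"
  shows "(\<lambda>(x, y). (a11 * x + a12 * y, a21 * x + a22 * y)) \<in> measurable (haar \<Otimes>\<^sub>M haar) (haar \<Otimes>\<^sub>M haar)"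
    and "distr (haar \<Otimes>\<^sub>M haar) (haar \<Otimes>\<^sub>M haar) (\<lambda>(x, y). (a11 * x + a12 * y, a21 * x + a22 * y)) = haar \<Otimes>\<^sub>M haar"
proof -
  interpret uniform_ball_measure p nv nv "(*)" haar "range of_rat" "\<lambda>n. ennreal (rad n)"
    by (rule uniform_ball_measure_haar)
  have "T a11 a12 a21 a22 = (\<lambda>(x, y). (a11 * x + a12 * y, a21 * x + a22 * y))"
    using T_def[OF assms] by (auto simp: lin2_def)
  thus "(\<lambda>(x, y). (a11 * x + a12 * y, a21 * x + a22 * y)) \<in> measurable (haar \<Otimes>\<^sub>M haar) (haar \<Otimes>\<^sub>M haar)"
    "distr (haar \<Otimes>\<^sub>M haar) (haar \<Otimes>\<^sub>M haar) (\<lambda>(x, y). (a11 * x + a12 * y, a21 * x + a22 * y)) = haar \<Otimes>\<^sub>M haar"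
    using T_measurable[OF assms] distr_T[OF assms] by simp_all
qed

lemma sets_haar_pair_balls:
  "sets (haar \<Otimes>\<^sub>M haar) = sigma_sets UNIV (range (\<lambda>(c, n). {y. max (nv (fst (y - c))) (nv (snd (y - c))) \<le> rad n}))"
proof -
  interpret haar: uniform_ball_measure p nv nv "(*)" haar "range of_rat" "\<lambda>n. ennreal (rad n)"
    by (rule uniform_ball_measure_haar)
  have box_eq: "haar.vball c n \<times> haar.vball c' n = {y. max (nv (fst (y - (c, c')))) (nv (snd (y - (c, c')))) \<le> rad n}"
    for c c' n
    unfolding haar.vball_def by auto
  have "haar.boxes = range (\<lambda>(c, n). {y. max (nv (fst (y - c))) (nv (snd (y - c))) \<le> rad n})"
    unfolding haar.boxes_def
  proof (intro equalityI subsetI)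
    fix X
    assume "X \<in> range (\<lambda>(c, c', n). haar.vball c n \<times> haar.vball c' n)"
    then obtain c c' n where "X = haar.vball c n \<times> haar.vball c' n"
      by auto
    thus "X \<in> range (\<lambda>(c, n). {y. max (nv (fst (y - c))) (nv (snd (y - c))) \<le> rad n})"
      unfolding box_eq by (intro image_eqI[of _ _ "((c, c'), n)"]) auto
  next
    fix X
    assume "X \<in> range (\<lambda>(c, n). {y. max (nv (fst (y - c))) (nv (snd (y - c))) \<le> rad n})"
    then obtain c c' n where "X = {y. max (nv (fst (y - (c, c')))) (nv (snd (y - (c, c')))) \<le> rad n}"
      by auto
    thus "X \<in> range (\<lambda>(c, c', n). haar.vball c n \<times> haar.vball c' n)"
      unfolding box_eq[symmetric] by (intro image_eqI[of _ _ "(c, c', n)"]) auto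
  qed
  thus ?thesis
    using haar.sets_pair_P by simp
qed

lemma emeasure_haar_pair_ball:
  "emeasure (haar \<Otimes>\<^sub>M haar) {y. max (nv (fst (y - c))) (nv (snd (y - c))) \<le> rad n} =
     (if max (nv (fst c)) (nv (snd c)) \<le> 1 then ennreal (rad n) * ennreal (rad n) else 0)"
proof -
  interpret haar: uniform_ball_measure p nv nv "(*)" haar "range of_rat" "\<lambda>n. ennreal (rad n)"
    by (rule uniform_ball_measure_haar)
  have "haar.vball (fst c) n \<times> haar.vball (snd c) n = {y. max (nv (fst (y - c))) (nv (snd (y - c))) \<le> rad n}"
    unfolding haar.vball_def by auto
  thus ?thesis
    using haar.emeasure_pair_P_box[of "fst c" n "snd c"] by (simp add: haar.Nm2_def)
qed

lemma uniform_ball_measure_haar_pair: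
  "uniform_ball_measure p nv (\<lambda>z. max (nv (fst z)) (nv (snd z))) (\<lambda>a z. (a * fst z, a * snd z))
     (haar \<Otimes>\<^sub>M haar) (range of_rat \<times> range of_rat) (\<lambda>n. ennreal (rad n) * ennreal (rad n))"
proof (intro uniform_ball_measure.intro uniform_ball_measure_axioms.intro padic_field_axioms)
  fix x y :: "'k \<times> 'k" and a b :: 'k and n
  show "max (nv (fst (x + y))) (nv (snd (x + y))) \<le> max (max (nv (fst x)) (nv (snd x))) (max (nv (fst y)) (nv (snd y)))"
    using nv_ultra[of "fst x" "fst y"] nv_ultra[of "snd x" "snd y"] by (simp add: max_def split: if_splits)
  show "max (nv (fst (a * fst x, a * snd x))) (nv (snd (a * fst x, a * snd x))) = nv a * max (nv (fst x)) (nv (snd x))"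
    by (simp add: nv_mult max_mult_distrib_left)
  show "(a * fst (x + y), a * snd (x + y)) = (a * fst x, a * snd x) + (a * fst y, a * snd y)"
    by (simp add: distrib_left)
  show "((a + b) * fst x, (a + b) * snd x) = (a * fst x, a * snd x) + (b * fst x, b * snd x)"
    by (simp add: distrib_right)
  obtain q1 q2 where "nv (fst x - of_rat q1) < rad n" "nv (snd x - of_rat q2) < rad n"
    using nv_dense[OF rad_pos[of n]] by meson
  thus "\<exists>d\<in>range of_rat \<times> range of_rat. max (nv (fst (x - d))) (nv (snd (x - d))) \<le> rad n"
    by (intro bexI[of _ "(of_rat q1, of_rat q2)"]) auto
  show "emeasure (haar \<Otimes>\<^sub>M haar) {y. max (nv (fst (y - c))) (nv (snd (y - c))) \<le> rad n} =
      (if max (nv (fst c)) (nv (snd c)) \<le> 1 then ennreal (rad n) * ennreal (rad n) else 0)" for c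
    by (rule emeasure_haar_pair_ball)
qed (simp_all add: sets_haar_pair_balls space_pair_measure prob_space_pair prob_space_haar)

lemma distr_haar_quad_orthonormal:
  assumes "orthonormal_pair nv a11 a12 a21 a22"
  defines "Q \<equiv> \<lambda>(x, y). ((a11 * fst x + a12 * fst y, a11 * snd x + a12 * snd y),
                         (a21 * fst x + a22 * fst y, a21 * snd x + a22 * snd y))"
  shows "Q \<in> measurable ((haar \<Otimes>\<^sub>M haar) \<Otimes>\<^sub>M (haar \<Otimes>\<^sub>M haar)) ((haar \<Otimes>\<^sub>M haar) \<Otimes>\<^sub>M (haar \<Otimes>\<^sub>M haar))"
    and "distr ((haar \<Otimes>\<^sub>M haar) \<Otimes>\<^sub>M (haar \<Otimes>\<^sub>M haar)) ((haar \<Otimes>\<^sub>M haar) \<Otimes>\<^sub>M (haar \<Otimes>\<^sub>M haar)) Q =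
           (haar \<Otimes>\<^sub>M haar) \<Otimes>\<^sub>M (haar \<Otimes>\<^sub>M haar)"
proof -
  interpret uniform_ball_measure p nv "\<lambda>z. max (nv (fst z)) (nv (snd z))" "\<lambda>a z. (a * fst z, a * snd z)"
    "haar \<Otimes>\<^sub>M haar" "range of_rat \<times> range of_rat" "\<lambda>n. ennreal (rad n) * ennreal (rad n)"
    by (rule uniform_ball_measure_haar_pair)
  have "T a11 a12 a21 a22 = Q"
    using T_def[OF assms(1)] by (auto simp: Q_def lin2_def)
  thus "Q \<in> measurable ((haar \<Otimes>\<^sub>M haar) \<Otimes>\<^sub>M (haar \<Otimes>\<^sub>M haar)) ((haar \<Otimes>\<^sub>M haar) \<Otimes>\<^sub>M (haar \<Otimes>\<^sub>M haar))"
    "distr ((haar \<Otimes>\<^sub>M haar) \<Otimes>\<^sub>M (haar \<Otimes>\<^sub>M haar)) ((haar \<Otimes>\<^sub>M haar) \<Otimes>\<^sub>M (haar \<Otimes>\<^sub>M haar)) Q =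
       (haar \<Otimes>\<^sub>M haar) \<Otimes>\<^sub>M (haar \<Otimes>\<^sub>M haar)"
    using T_measurable[OF assms(1)] distr_T[OF assms(1)] by simp_all
qed

end


section \<open>Stationary Gaussian processes with Haar coefficients\<close>

lemma qgauss_law_distrI:
  assumes Q: "prob_space Q" and \<Phi>: "\<Phi> \<in> measurable Q N"
    and G: "\<And>a11 a12 a21 a22. orthonormal_pair nv a11 a12 a21 a22 \<Longrightarrow>
      (\<lambda>(x, y). (add (sm a11 x) (sm a12 y), add (sm a21 x) (sm a22 y))) \<in> measurable (N \<Otimes>\<^sub>M N) (N \<Otimes>\<^sub>M N)"
    and T: "\<And>a11 a12 a21 a22. orthonormal_pair nv a11 a12 a21 a22 \<Longrightarrow> \<exists>T.
      T \<in> measurable (Q \<Otimes>\<^sub>M Q) (Q \<Otimes>\<^sub>M Q) \<and> distr (Q \<Otimes>\<^sub>M Q) (Q \<Otimes>\<^sub>M Q) T = Q \<Otimes>\<^sub>M Q \<and>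
      (\<forall>z\<in>space (Q \<Otimes>\<^sub>M Q). (add (sm a11 (\<Phi> (fst z))) (sm a12 (\<Phi> (snd z))),
          add (sm a21 (\<Phi> (fst z))) (sm a22 (\<Phi> (snd z)))) = (\<Phi> (fst (T z)), \<Phi> (snd (T z))))"
  shows "qgauss_law nv N add sm (distr Q N \<Phi>)"
  unfolding qgauss_law_def
proof (intro allI impI)
  fix a11 a12 a21 a22
  assume onp: "orthonormal_pair nv a11 a12 a21 a22"
  obtain T where T_meas: "T \<in> measurable (Q \<Otimes>\<^sub>M Q) (Q \<Otimes>\<^sub>M Q)"
    and T_distr: "distr (Q \<Otimes>\<^sub>M Q) (Q \<Otimes>\<^sub>M Q) T = Q \<Otimes>\<^sub>M Q"
    and T_compat: "\<forall>z\<in>space (Q \<Otimes>\<^sub>M Q). (add (sm a11 (\<Phi> (fst z))) (sm a12 (\<Phi> (snd z))),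
          add (sm a21 (\<Phi> (fst z))) (sm a22 (\<Phi> (snd z)))) = (\<Phi> (fst (T z)), \<Phi> (snd (T z)))"
    using T[OF onp] by blast
  let ?\<mu> = "distr Q N \<Phi>"
  let ?\<Phi>2 = "\<lambda>(x, y). (\<Phi> x, \<Phi> y)"
  let ?G = "\<lambda>(x, y). (add (sm a11 x) (sm a12 y), add (sm a21 x) (sm a22 y))"
  have \<Phi>2: "?\<Phi>2 \<in> measurable (Q \<Otimes>\<^sub>M Q) (N \<Otimes>\<^sub>M N)"
    using \<Phi> by (auto simp: case_prod_beta')
  have \<mu>2: "?\<mu> \<Otimes>\<^sub>M ?\<mu> = distr (Q \<Otimes>\<^sub>M Q) (N \<Otimes>\<^sub>M N) ?\<Phi>2"
    using prob_space.prob_space_distr[OF Q \<Phi>]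
    by (intro pair_measure_distr[OF \<Phi> \<Phi>] prob_space_imp_sigma_finite)
  have "distr (?\<mu> \<Otimes>\<^sub>M ?\<mu>) (N \<Otimes>\<^sub>M N) ?G = distr (Q \<Otimes>\<^sub>M Q) (N \<Otimes>\<^sub>M N) (?G \<circ> ?\<Phi>2)"
    unfolding \<mu>2 by (rule distr_distr[OF G[OF onp] \<Phi>2])
  also have "\<dots> = distr (Q \<Otimes>\<^sub>M Q) (N \<Otimes>\<^sub>M N) (?\<Phi>2 \<circ> T)"
    using T_compat by (intro distr_cong) (auto simp: case_prod_beta')
  also have "\<dots> = distr (distr (Q \<Otimes>\<^sub>M Q) (Q \<Otimes>\<^sub>M Q) T) (N \<Otimes>\<^sub>M N) ?\<Phi>2"
    by (rule distr_distr[symmetric, OF \<Phi>2 T_meas])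
  also have "\<dots> = ?\<mu> \<Otimes>\<^sub>M ?\<mu>"
    unfolding T_distr \<mu>2 ..
  finally show "distr (?\<mu> \<Otimes>\<^sub>M ?\<mu>) (N \<Otimes>\<^sub>M N) ?G = ?\<mu> \<Otimes>\<^sub>M ?\<mu>" .
qed

lemma (in prob_space) indep_vars_same_event:
  assumes indep: "indep_vars (\<lambda>_. N) X I" and ij: "i \<in> I" "j \<in> I" "i \<noteq> j"
    and S: "S \<in> sets N" and T: "T \<in> sets N" and G: "G \<in> events"
    and XS: "AE \<omega> in M. X i \<omega> \<in> S \<longleftrightarrow> \<omega> \<in> G" and XT: "AE \<omega> in M. X j \<omega> \<in> T \<longleftrightarrow> \<omega> \<in> G"
  shows "prob G = 0 \<or> prob G = 1"
proof -
  define E where "E k = (if k = i then S else T)" for k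
  have E: "E k \<in> sets N" for k
    using S T by (simp add: E_def)
  have X: "X k \<in> measurable M N" if "k \<in> I" for k
    using indep that unfolding indep_vars_def by auto
  have events: "X k -` E k \<inter> space M \<in> events" if "k \<in> I" for k
    using measurable_sets[OF X[OF that] E] .
  have "prob (\<Inter>k\<in>{i, j}. X k -` E k \<inter> space M) = (\<Prod>k\<in>{i, j}. prob (X k -` E k \<inter> space M))"
    using ij E by (intro indep_varsD[OF indep]) auto
  moreover have "prob (X i -` E i \<inter> space M) = prob G" "prob (X j -` E j \<inter> space M) = prob G"
    using XS XT events[OF ij(1)] events[OF ij(2)] G ij(3) unfolding E_def
    by (auto intro!: finite_measure_eq_AE)
  moreover have "prob ((X i -` E i \<inter> space M) \<inter> (X j -` E j \<inter> space M)) = prob G"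
    using events[OF ij(1)] events[OF ij(2)] G ij(3) unfolding E_def
    by (intro finite_measure_eq_AE) (use XS XT in auto)
  ultimately have "prob G = prob G * prob G"
    using ij(3) by simp
  thus ?thesis
    by (metis mult_cancel_left1)
qed

context padic_field
begin

lemma orthonormal_pair_shear:
  assumes "nv t \<le> 1"
  shows "orthonormal_pair nv 1 t 0 1"
  unfolding orthonormal_pair_def
proof (intro allI)
  fix b1 b2 :: 'k
  have "nv (b1 * t) \<le> nv b1"
    using assms by (simp add: nv_mult mult_left_le)
  hence "max (nv b1) (nv (b1 * t + b2)) = max (nv b1) (nv b2)"
    using nv_ultra[of "b1 * t" b2] nv_ultra[of "b1 * t + b2" "- (b1 * t)"]
    by (simp add: max_def split: if_splits)
  thus "max (nv (b1 * 1 + b2 * 0)) (nv (b1 * t + b2 * 1)) = max (nv b1) (nv b2)"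
    by simp
qed

lemma nv_le_sets:
  assumes "r > 0"
  shows "{y. nv y \<le> r} \<in> sets (Kborel nv)"
proof (rule nv_open_sets)
  show "nv_open nv {y. nv y \<le> r}"
    unfolding nv_open_def
  proof (intro ballI exI[of _ r] conjI allI impI assms)
    fix x y
    assume "x \<in> {y. nv y \<le> r}" "nv (y - x) < r"
    thus "y \<in> {y. nv y \<le> r}"
      using nv_add_le[of "y - x" r x] by simp
  qed
qed

lemma zero_Ccarrier: "(\<lambda>_. 0) \<in> Ccarrier nv"
  using Ccarrier_smult[OF const_one_Ccarrier, of 0] by simp

lemma affine_fn_lincomb:
  "C_add (C_smult a (affine_fn h z)) (C_smult b (affine_fn h w)) =
     affine_fn h (a * fst z + b * fst w, a * snd z + b * snd w)"
  by (auto simp: fun_eq_iff C_add_def C_smult_def affine_fn_def algebra_simps)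

definition shift_adds_constant :: "('k \<Rightarrow> 'k) \<Rightarrow> bool" where
  "shift_adds_constant h \<longleftrightarrow> (\<forall>s\<in>Zp nv. \<exists>t\<in>Zp nv. \<forall>x\<in>Zp nv. h (x + s) = h x + t)"

lemma shift_adds_constant_zero: "shift_adds_constant (\<lambda>_. 0)"
  unfolding shift_adds_constant_def by (auto intro: bexI[of _ 0])

lemma shift_adds_constant_id_plus: "shift_adds_constant (id_plus c)"
  unfolding shift_adds_constant_def by (auto simp: id_plus_def nv_add_le)

end

locale haar_pair = padic_field p nv for p :: nat and nv :: "'k::field_char_0 \<Rightarrow> real" +
  fixes M :: "'w measure" and A B :: "'w \<Rightarrow> 'k"
  assumes prob_space_M: "prob_space M"
    and AB_measurable: "(\<lambda>\<omega>. (A \<omega>, B \<omega>)) \<in> measurable M (Kborel nv \<Otimes>\<^sub>M Kborel nv)"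
    and distr_AB: "distr M (Kborel nv \<Otimes>\<^sub>M Kborel nv) (\<lambda>\<omega>. (A \<omega>, B \<omega>)) = haar \<Otimes>\<^sub>M haar"
begin

lemma sets_haar_pair: "sets (haar \<Otimes>\<^sub>M haar) = sets (Kborel nv \<Otimes>\<^sub>M Kborel nv)"
  by (intro sets_pair_measure_cong) (simp_all add: sets_haar)

lemma distr_AB_comp:
  assumes "F \<in> measurable (Kborel nv \<Otimes>\<^sub>M Kborel nv) N"
  shows "distr M N (\<lambda>\<omega>. F (A \<omega>, B \<omega>)) = distr (haar \<Otimes>\<^sub>M haar) N F"
  using distr_distr[OF assms AB_measurable] distr_AB by (simp add: comp_def)

lemma emeasure_AB:
  assumes "X \<in> sets (Kborel nv \<Otimes>\<^sub>M Kborel nv)"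
  shows "emeasure M {\<omega> \<in> space M. (A \<omega>, B \<omega>) \<in> X} = emeasure (haar \<Otimes>\<^sub>M haar) X"
  using emeasure_distr[OF AB_measurable assms] distr_AB by (simp add: vimage_def Int_def conj_commute)

lemma prob_nv_le_rad:
  assumes "Z \<in> {A, B}"
  shows "{\<omega> \<in> space M. nv (Z \<omega>) \<le> rad k} \<in> sets M"
    and "measure M {\<omega> \<in> space M. nv (Z \<omega>) \<le> rad k} = rad k"
proof -
  interpret prob_space haar
    by (rule prob_space_haar)
  define X where "X = (if Z = A then Kball 0 k \<times> UNIV else UNIV \<times> Kball 0 k)"
  have X: "X \<in> sets (Kborel nv \<Otimes>\<^sub>M Kborel nv)"
    using sets.top[of "Kborel nv"] unfolding X_def by (auto intro: Kball_sets)
  have set_eq: "{\<omega> \<in> space M. nv (Z \<omega>) \<le> rad k} = {\<omega> \<in> space M. (A \<omega>, B \<omega>) \<in> X}"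
    using assms by (auto simp: X_def Kball_def)
  show "{\<omega> \<in> space M. nv (Z \<omega>) \<le> rad k} \<in> sets M"
    unfolding set_eq using measurable_sets[OF AB_measurable X] by (simp add: vimage_def Int_def conj_commute)
  have UNIV: "UNIV \<in> sets haar"
    using sets.top[of haar] by simp
  have K: "Kball 0 k \<in> sets haar"
    using Kball_sets by (simp add: sets_haar)
  have "emeasure (haar \<Otimes>\<^sub>M haar) X = ennreal (rad k)"
    unfolding X_def
    using emeasure_pair_measure_Times[OF K UNIV] emeasure_pair_measure_Times[OF UNIV K]
      emeasure_haar_Kball[of 0 k] emeasure_space_1
    by simp
  thus "measure M {\<omega> \<in> space M. nv (Z \<omega>) \<le> rad k} = rad k"
    unfolding set_eq using emeasure_AB[OF X] rad_pos[of k] by (simp add: measure_def)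
qed

lemma AE_in_unit_ball: "Z \<in> {A, B} \<Longrightarrow> AE \<omega> in M. nv (Z \<omega>) \<le> 1"
  using prob_space.prob_Collect_eq_1[OF prob_space_M prob_nv_le_rad(1), of Z 0] prob_nv_le_rad(2)[of Z 0]
  by simp

lemma AE_exists_nonzero:
  assumes "Z \<in> {A, B}" and "AE \<omega> in M. P \<omega>"
  obtains \<omega> where "\<omega> \<in> space M" "Z \<omega> \<noteq> 0" "P \<omega>"
proof (rule ccontr)
  interpret prob_space M
    by (rule prob_space_M)
  assume "\<not> thesis"
  from assms(2) have "AE \<omega> in M. nv (Z \<omega>) \<le> rad 1"
  proof (rule AE_mp, intro AE_I2 impI)
    fix \<omega>
    assume "\<omega> \<in> space M" "P \<omega>"
    hence "Z \<omega> = 0"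
      using that \<open>\<not> thesis\<close> by blast
    thus "nv (Z \<omega>) \<le> rad 1"
      using rad_pos[of 1] by simp
  qed
  hence "prob {\<omega> \<in> space M. nv (Z \<omega>) \<le> rad 1} = 1"
    using prob_Collect_eq_1[OF prob_nv_le_rad(1)[OF assms(1)]] by simp
  thus False
    using prob_nv_le_rad(2)[OF assms(1), of 1] rad_less_1[of 1] by simp
qed

lemma indep_no_shared_event:
  assumes indep: "prob_space.indep_vars M (\<lambda>_. Kborel nv) \<Gamma> UNIV" and "n \<noteq> m" "k > 0" "r1 > 0" "r2 > 0"
    and Z: "Z \<in> {A, B}"
    and n: "AE \<omega> in M. nv (\<Gamma> n \<omega>) \<le> r1 \<longleftrightarrow> nv (Z \<omega>) \<le> rad k"
    and m: "AE \<omega> in M. nv (\<Gamma> m \<omega>) \<le> r2 \<longleftrightarrow> nv (Z \<omega>) \<le> rad k"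
  shows False
proof -
  interpret prob_space M
    by (rule prob_space_M)
  have "prob {\<omega> \<in> space M. nv (Z \<omega>) \<le> rad k} = 0 \<or> prob {\<omega> \<in> space M. nv (Z \<omega>) \<le> rad k} = 1"
    using n m \<open>n \<noteq> m\<close> \<open>r1 > 0\<close> \<open>r2 > 0\<close> prob_nv_le_rad(1)[OF Z]
    by (intro indep_vars_same_event[OF indep, of n m "{y. nv y \<le> r1}" "{y. nv y \<le> r2}"] nv_le_sets)
       auto
  thus False
    using prob_nv_le_rad(2)[OF Z, of k] rad_pos[of k] rad_less_1[OF \<open>k > 0\<close>] by simp
qed

definition haar_process :: "('k \<Rightarrow> 'k) \<Rightarrow> 'w \<Rightarrow> 'k \<Rightarrow> 'k" where
  "haar_process h \<omega> = affine_fn h (A \<omega>, B \<omega>)"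

lemma haar_process_measurable: "h \<in> Ccarrier nv \<Longrightarrow> haar_process h \<in> measurable M (Cborel nv)"
  unfolding haar_process_def using measurable_comp[OF AB_measurable affine_fn_measurable]
  by (simp add: comp_def)

lemma distr_haar_process:
  "h \<in> Ccarrier nv \<Longrightarrow> distr M (Cborel nv) (haar_process h) = distr (haar \<Otimes>\<^sub>M haar) (Cborel nv) (affine_fn h)"
  unfolding haar_process_def by (rule distr_AB_comp[OF affine_fn_measurable])

text \<open>The pair of values of \<open>a\<^sub>1\<^sub>1 X\<^sub>1 + a\<^sub>1\<^sub>2 X\<^sub>2\<close> and \<open>a\<^sub>2\<^sub>1 X\<^sub>1 + a\<^sub>2\<^sub>2 X\<^sub>2\<close> is the image of the
  coefficients under the orthonormal map acting on \<open>(K\<^sup>2)\<^sup>2\<close>, which preserves the Haar measure.\<close>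

lemma haar_process_gaussian:
  assumes "C_separable" and h: "h \<in> Ccarrier nv"
  shows "C_gaussian_rv nv M (haar_process h)"
  unfolding C_gaussian_rv_def distr_haar_process[OF h]
proof (intro conjI haar_process_measurable[OF h] qgauss_law_distrI)
  show "prob_space (haar \<Otimes>\<^sub>M haar)"
    by (intro prob_space_pair prob_space_haar)
  show "affine_fn h \<in> measurable (haar \<Otimes>\<^sub>M haar) (Cborel nv)"
    using affine_fn_measurable[OF h] by (simp add: measurable_cong_sets[OF sets_haar_pair refl])
  fix a11 a12 a21 a22
  assume onp: "orthonormal_pair nv a11 a12 a21 a22"
  show "(\<lambda>(x, y). (C_add (C_smult a11 x) (C_smult a12 y), C_add (C_smult a21 x) (C_smult a22 y)))
      \<in> measurable (Cborel nv \<Otimes>\<^sub>M Cborel nv) (Cborel nv \<Otimes>\<^sub>M Cborel nv)"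
    by (rule C_orthonormal_map_measurable[OF assms(1) onp])
  show "\<exists>T. T \<in> measurable ((haar \<Otimes>\<^sub>M haar) \<Otimes>\<^sub>M (haar \<Otimes>\<^sub>M haar)) ((haar \<Otimes>\<^sub>M haar) \<Otimes>\<^sub>M (haar \<Otimes>\<^sub>M haar)) \<and>
      distr ((haar \<Otimes>\<^sub>M haar) \<Otimes>\<^sub>M (haar \<Otimes>\<^sub>M haar)) ((haar \<Otimes>\<^sub>M haar) \<Otimes>\<^sub>M (haar \<Otimes>\<^sub>M haar)) T =
        (haar \<Otimes>\<^sub>M haar) \<Otimes>\<^sub>M (haar \<Otimes>\<^sub>M haar) \<and>
      (\<forall>z\<in>space ((haar \<Otimes>\<^sub>M haar) \<Otimes>\<^sub>M (haar \<Otimes>\<^sub>M haar)).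
        (C_add (C_smult a11 (affine_fn h (fst z))) (C_smult a12 (affine_fn h (snd z))),
         C_add (C_smult a21 (affine_fn h (fst z))) (C_smult a22 (affine_fn h (snd z)))) =
        (affine_fn h (fst (T z)), affine_fn h (snd (T z))))"
    using distr_haar_quad_orthonormal[OF onp]
    by (intro exI conjI) (auto simp: affine_fn_lincomb)
qed

text \<open>Translating by \<open>s\<close> turns \<open>a + b h\<close> into \<open>(a + t b) + b h\<close>, a shear of the coefficients.\<close>

lemma haar_process_stationary:
  assumes h: "h \<in> Ccarrier nv"
    and shift: "shift_adds_constant h"
  shows "C_stationary nv M (haar_process h)"
  unfolding C_stationary_def
proof
  fix s
  assume "s \<in> Zp nv"
  then obtain t where "t \<in> Zp nv" and ht: "\<forall>x\<in>Zp nv. h (x + s) = h x + t"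
    using shift unfolding shift_adds_constant_def by blast
  hence t: "nv t \<le> 1"
    by simp
  let ?S = "\<lambda>(x, y). (1 * x + t * y, 0 * x + 1 * y)"
  note S = distr_haar_orthonormal[OF orthonormal_pair_shear[OF t]]
  have S_meas: "?S \<in> measurable (Kborel nv \<Otimes>\<^sub>M Kborel nv) (Kborel nv \<Otimes>\<^sub>M Kborel nv)"
    using S(1) by (simp add: measurable_cong_sets[OF sets_haar_pair sets_haar_pair])
  have "C_shift nv s (haar_process h \<omega>) = (affine_fn h \<circ> ?S) (A \<omega>, B \<omega>)" for \<omega>
    using \<open>s \<in> Zp nv\<close> ht Ccarrier_outside[OF h]
    by (auto simp: fun_eq_iff C_shift_def haar_process_def affine_fn_def const_one_def nv_add_le algebra_simps)
  hence "distr M (Cborel nv) (\<lambda>\<omega>. C_shift nv s (haar_process h \<omega>)) = distr (haar \<Otimes>\<^sub>M haar) (Cborel nv) (affine_fn h \<circ> ?S)"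
    using distr_AB_comp[OF measurable_comp[OF S_meas affine_fn_measurable[OF h]]] by simp
  also have "\<dots> = distr (distr (haar \<Otimes>\<^sub>M haar) (haar \<Otimes>\<^sub>M haar) ?S) (Cborel nv) (affine_fn h)"
    using affine_fn_measurable[OF h] S(1)
    by (intro distr_distr[symmetric]) (simp_all add: measurable_cong_sets[OF sets_haar_pair refl])
  also have "\<dots> = distr M (Cborel nv) (haar_process h)"
    unfolding S(2) distr_haar_process[OF h] ..
  finally show "distr M (Cborel nv) (\<lambda>\<omega>. C_shift nv s (haar_process h \<omega>)) = distr M (Cborel nv) (haar_process h)" .
qed

end

lemma prob_space_transfer:
  fixes j :: "'a \<Rightarrow> 'b"
  assumes Q: "prob_space Q" and j: "inj_on j (space Q)"
  obtains M :: "'b measure" and r where "prob_space M" "r \<in> measurable M Q" "distr M Q r = Q"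
proof -
  obtain a where a: "a \<in> space Q"
    using prob_space.not_empty[OF Q] by blast
  define r where "r y = (if y \<in> j ` space Q then the_inv_into (space Q) j y else a)" for y
  have r_j: "r (j x) = x" if "x \<in> space Q" for x
    using j that by (simp add: r_def the_inv_into_f_f)
  have "r \<in> UNIV \<rightarrow> space Q"
    using j a by (auto simp: r_def the_inv_into_into)
  hence r: "r \<in> measurable (vimage_algebra UNIV r Q) Q"
    by (rule measurable_vimage_algebra1)
  have "(\<lambda>x. r (j x)) \<in> measurable Q Q"
    using measurable_ident[of Q] by (rule measurable_cong[THEN iffD1, rotated]) (simp add: r_j)
  hence j_meas: "j \<in> measurable Q (vimage_algebra UNIV r Q)"
    by (intro measurable_vimage_algebra2) auto
  define M where "M = distr Q (vimage_algebra UNIV r Q) j"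
  have "distr M Q r = distr Q Q (r \<circ> j)"
    unfolding M_def using r j_meas by (rule distr_distr)
  also have "\<dots> = distr Q Q (\<lambda>x. x)"
    by (rule distr_cong) (simp_all add: r_j)
  finally have distr_M: "distr M Q r = Q"
    by simp
  have "prob_space M"
    unfolding M_def using Q j_meas by (rule prob_space.prob_space_distr)
  moreover have "r \<in> measurable M Q"
    unfolding M_def measurable_distr_eq1 by (rule r)
  ultimately show ?thesis
    using distr_M by (rule that)
qed

lemma inj_nat_fun_pair_to_real: "\<exists>j :: (nat \<Rightarrow> nat) \<times> (nat \<Rightarrow> nat) \<Rightarrow> real. inj j"
proof -
  define graph :: "(nat \<Rightarrow> nat) \<times> (nat \<Rightarrow> nat) \<Rightarrow> nat set" where
    "graph z = range (\<lambda>k. prod_encode (k, prod_encode (fst z k, snd z k)))" for z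
  have "inj graph"
  proof (rule injI)
    fix z z'
    assume eq: "graph z = graph z'"
    have "fst z k = fst z' k \<and> snd z k = snd z' k" for k
    proof -
      have "prod_encode (k, prod_encode (fst z k, snd z k)) \<in> graph z'"
        using eq unfolding graph_def by blast
      thus ?thesis
        unfolding graph_def by auto
    qed
    thus "z = z'"
      by (simp add: prod_eq_iff fun_eq_iff)
  qed
  moreover obtain b :: "nat set \<Rightarrow> real" where "bij b"
    using nat_sets_eqpoll_reals unfolding eqpoll_def by blast
  ultimately show ?thesis
    using inj_compose bij_is_inj by blast
qed

context padic_field
begin

text \<open>The theorem quantifies over probability spaces on the type \<open>real\<close>; the two independent
  Haar variables are realised there by injecting pairs of digit sequences into \<open>\<real>\<close>.\<close>

lemma haar_pair_on_reals:
  obtains M :: "real measure" and A B :: "real \<Rightarrow> 'k" where "haar_pair p nv M A B"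
proof -
  let ?Q = "digits_measure \<Otimes>\<^sub>M digits_measure"
  let ?L = "\<lambda>(v, w). (digit_limit v, digit_limit w)"
  obtain j :: "(nat \<Rightarrow> nat) \<times> (nat \<Rightarrow> nat) \<Rightarrow> real" where "inj j"
    using inj_nat_fun_pair_to_real by blast
  then obtain M :: "real measure" and r where M: "prob_space M" "r \<in> measurable M ?Q" "distr M ?Q r = ?Q"
    using prob_space_transfer[of ?Q j] prob_space_pair prob_space_digits_measure inj_on_subset by blast
  have L: "?L \<in> measurable ?Q (Kborel nv \<Otimes>\<^sub>M Kborel nv)"
    using digit_limit_measurable by measurable
  have "distr M (Kborel nv \<Otimes>\<^sub>M Kborel nv) (?L \<circ> r) = distr ?Q (Kborel nv \<Otimes>\<^sub>M Kborel nv) ?L"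
    using distr_distr[OF L M(2)] M(3) by simp
  also have "\<dots> = haar \<Otimes>\<^sub>M haar"
    unfolding haar_def using digit_limit_measurable prob_space_haar[unfolded haar_def]
    by (intro pair_measure_distr[symmetric] prob_space_imp_sigma_finite)
  finally have "haar_pair p nv M (\<lambda>\<omega>. digit_limit (fst (r \<omega>))) (\<lambda>\<omega>. digit_limit (snd (r \<omega>)))"
    using M(1) measurable_comp[OF M(2) L] padic_field_axioms
    by (simp add: haar_pair_def haar_pair_axioms_def comp_def case_prod_beta')
  thus ?thesis
    by (rule that)
qed

end

section \<open>Expansions in an orthonormal basis\<close>

locale padic_onb = padic_field p nv for p :: nat and nv :: "'k::field_char_0 \<Rightarrow> real" +
  fixes f :: "nat \<Rightarrow> 'k \<Rightarrow> 'k"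
  assumes onb: "orthonormal_basis_C nv f"
begin

lemma f_Ccarrier: "f n \<in> Ccarrier nv"
  using onb unfolding orthonormal_basis_C_def orthonormal_seq_C_def by blast

lemma supnorm_f_sum:
  "finite I \<Longrightarrow> I \<noteq> {} \<Longrightarrow> supnorm nv (\<lambda>x. \<Sum>i\<in>I. a i * f i x) = Max ((\<lambda>i. nv (a i)) ` I)"
  using onb unfolding orthonormal_basis_C_def orthonormal_seq_C_def by blast

lemma f_span_dense:
  "g \<in> Ccarrier nv \<Longrightarrow> e > 0 \<Longrightarrow> \<exists>I a. finite I \<and> supnorm nv (\<lambda>x. g x - (\<Sum>i\<in>I. a i * f i x)) < e"
  using onb unfolding orthonormal_basis_C_def by blast

lemma partial_sum_Ccarrier: "(\<lambda>x. \<Sum>n<N. a n * f n x) \<in> Ccarrier nv"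
  using f_Ccarrier by (intro Ccarrier_sum) auto

lemma partial_sums_dense:
  assumes "g \<in> Ccarrier nv" "e > 0"
  obtains n b where "n > 0" "supnorm nv (\<lambda>x. g x - (\<Sum>i<n. b i * f i x)) < e"
proof -
  obtain I a where I: "finite I" "supnorm nv (\<lambda>x. g x - (\<Sum>i\<in>I. a i * f i x)) < e"
    using f_span_dense[OF assms] by blast
  define n where "n = Suc (Max (insert 0 I))"
  have "I \<subseteq> {..<n}"
    using I(1) unfolding n_def by (auto simp: less_Suc_eq_le)
  hence "(\<Sum>i\<in>I. a i * f i x) = (\<Sum>i<n. (if i \<in> I then a i else 0) * f i x)" for x
    by (intro sum.mono_neutral_cong_left) auto
  thus ?thesis
    using that[of n] I(2) unfolding n_def by simp
qed

lemma rational_partial_sum_close: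
  assumes "n > 0" "e > 0"
  obtains q where "supnorm nv (\<lambda>x. (\<Sum>i<n. b i * f i x) - (\<Sum>i<n. of_rat (q i) * f i x)) < e"
proof -
  have "\<forall>i. \<exists>q. nv (b i - of_rat q) < e"
    using nv_dense[OF assms(2)] by blast
  then obtain q where q: "\<And>i. nv (b i - of_rat (q i)) < e"
    by metis
  have "supnorm nv (\<lambda>x. (\<Sum>i<n. b i * f i x) - (\<Sum>i<n. of_rat (q i) * f i x)) =
      supnorm nv (\<lambda>x. \<Sum>i<n. (b i - of_rat (q i)) * f i x)"
    by (simp add: sum_subtractf[symmetric] left_diff_distrib)
  also have "\<dots> = Max ((\<lambda>i. nv (b i - of_rat (q i))) ` {..<n})"
    using assms(1) by (intro supnorm_f_sum) auto
  also have "\<dots> < e"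
    using q assms(1) by (subst Max_less_iff) auto
  finally show ?thesis
    by (rule that)
qed

lemma C_separable_basis: "C_separable"
  unfolding C_separable_def
proof (intro exI conjI ballI allI impI)
  let ?D = "range (\<lambda>qs x. \<Sum>i<length qs. of_rat (qs ! i) * f i x)"
  show "countable ?D"
    by simp
  show "?D \<subseteq> Ccarrier nv"
    using partial_sum_Ccarrier by auto
  fix g and e :: real
  assume g: "g \<in> Ccarrier nv" and e: "e > 0"
  obtain n b where n: "n > 0" and close_b: "supnorm nv (\<lambda>x. g x - (\<Sum>i<n. b i * f i x)) < e"
    using partial_sums_dense[OF g e] by blast
  obtain q where "supnorm nv (\<lambda>x. (\<Sum>i<n. b i * f i x) - (\<Sum>i<n. of_rat (q i) * f i x)) < e"
    using rational_partial_sum_close[OF n e] by blast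
  hence "supnorm nv (\<lambda>x. g x - (\<Sum>i<n. of_rat (q i) * f i x)) < e"
    using supnorm_ultra_diff[OF g partial_sum_Ccarrier[where N = n and a = b]
        partial_sum_Ccarrier[where N = n and a = "\<lambda>i. of_rat (q i)"]] close_b
    by simp
  moreover have "(\<lambda>x. \<Sum>i<n. of_rat (q i) * f i x) \<in> ?D"
    by (rule range_eqI[where x = "map q [0..<n]"]) (intro ext sum.cong, auto)
  ultimately show "\<exists>d\<in>?D. supnorm nv (\<lambda>x. g x - d x) < e"
    by (rule bexI)
qed

definition has_expansion :: "(nat \<Rightarrow> 'k) \<Rightarrow> ('k \<Rightarrow> 'k) \<Rightarrow> bool" where
  "has_expansion a g \<longleftrightarrow> (\<lambda>N. supnorm nv (\<lambda>x. g x - (\<Sum>n<N. a n * f n x))) \<longlonglongrightarrow> 0"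

lemma has_expansion_unique:
  assumes g: "g \<in> Ccarrier nv" and a: "has_expansion a g" and b: "has_expansion b g"
  shows "a = b"
proof
  fix n
  show "a n = b n"
  proof (rule ccontr)
    assume "a n \<noteq> b n"
    define \<delta> where "\<delta> = nv (a n - b n)"
    have \<delta>: "\<delta> > 0"
      unfolding \<delta>_def using \<open>a n \<noteq> b n\<close> nv_pos by simp
    have "eventually (\<lambda>N. supnorm nv (\<lambda>x. g x - (\<Sum>n<N. a n * f n x)) < \<delta> \<and>
        supnorm nv (\<lambda>x. g x - (\<Sum>n<N. b n * f n x)) < \<delta>) sequentially"
      using a b \<delta> unfolding has_expansion_def by (intro eventually_conj order_tendstoD(2)) auto
    then obtain N0 where N0: "\<And>N. N \<ge> N0 \<Longrightarrow> supnorm nv (\<lambda>x. g x - (\<Sum>n<N. a n * f n x)) < \<delta> \<and>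
        supnorm nv (\<lambda>x. g x - (\<Sum>n<N. b n * f n x)) < \<delta>"
      unfolding eventually_sequentially by blast
    define N where "N = max N0 (Suc n)"
    have N: "N > n" "supnorm nv (\<lambda>x. g x - (\<Sum>n<N. a n * f n x)) < \<delta>"
      "supnorm nv (\<lambda>x. g x - (\<Sum>n<N. b n * f n x)) < \<delta>"
      using N0[of N] unfolding N_def by auto
    have "\<delta> \<le> Max ((\<lambda>k. nv (a k - b k)) ` {..<N})"
      unfolding \<delta>_def using N(1) by (intro Max_ge) auto
    also have "\<dots> = supnorm nv (\<lambda>x. \<Sum>k<N. (a k - b k) * f k x)"
      using N(1) by (intro supnorm_f_sum[symmetric]) auto
    also have "\<dots> = supnorm nv (\<lambda>x. (\<Sum>k<N. a k * f k x) - (\<Sum>k<N. b k * f k x))"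
      by (simp add: sum_subtractf[symmetric] left_diff_distrib)
    also have "\<dots> \<le> max (supnorm nv (\<lambda>x. (\<Sum>k<N. a k * f k x) - g x)) (supnorm nv (\<lambda>x. g x - (\<Sum>k<N. b k * f k x)))"
      by (intro supnorm_ultra_diff g partial_sum_Ccarrier)
    also have "\<dots> < \<delta>"
      using N(2,3) supnorm_minus_commute[of "\<lambda>x. \<Sum>k<N. a k * f k x" g] by simp
    finally show False
      by simp
  qed
qed

lemma has_expansion_smult:
  assumes g: "g \<in> Ccarrier nv" and a: "has_expansion a g"
  shows "has_expansion (\<lambda>n. c * a n) (\<lambda>x. c * g x)"
proof -
  have "(\<lambda>x. c * g x - (\<Sum>n<N. c * a n * f n x)) = (\<lambda>x. c * (g x - (\<Sum>n<N. a n * f n x)))" for N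
    by (simp add: sum_distrib_left right_diff_distrib mult.assoc)
  hence "supnorm nv (\<lambda>x. c * g x - (\<Sum>n<N. c * a n * f n x)) = nv c * supnorm nv (\<lambda>x. g x - (\<Sum>n<N. a n * f n x))" for N
    by (simp add: supnorm_smult Ccarrier_diff[OF g partial_sum_Ccarrier])
  moreover have "(\<lambda>N. nv c * supnorm nv (\<lambda>x. g x - (\<Sum>n<N. a n * f n x))) \<longlonglongrightarrow> 0"
    using a unfolding has_expansion_def by (rule tendsto_mult_right_zero)
  ultimately show ?thesis
    unfolding has_expansion_def by simp
qed

lemma has_expansion_add:
  assumes g: "g \<in> Ccarrier nv" and h: "h \<in> Ccarrier nv" and a: "has_expansion a g" and b: "has_expansion b h"
  shows "has_expansion (\<lambda>n. a n + b n) (\<lambda>x. g x + h x)"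
  unfolding has_expansion_def
proof (rule tendsto_sandwich[OF _ _ tendsto_const tendsto_max[OF a[unfolded has_expansion_def] b[unfolded has_expansion_def]], simplified])
  have "(\<lambda>x. g x + h x - (\<Sum>n<N. (a n + b n) * f n x)) \<in> Ccarrier nv" for N
    using Ccarrier_add[OF Ccarrier_diff[OF g partial_sum_Ccarrier] Ccarrier_diff[OF h partial_sum_Ccarrier]]
    by (simp add: sum.distrib algebra_simps)
  thus "\<forall>\<^sub>F N in sequentially. 0 \<le> supnorm nv (\<lambda>x. g x + h x - (\<Sum>n<N. (a n + b n) * f n x))"
    by (simp add: supnorm_nonneg)
  have "(\<lambda>x. g x + h x - (\<Sum>n<N. (a n + b n) * f n x)) =
      (\<lambda>x. (g x - (\<Sum>n<N. a n * f n x)) + (h x - (\<Sum>n<N. b n * f n x)))" for N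
    by (simp add: fun_eq_iff sum.distrib algebra_simps)
  thus "\<forall>\<^sub>F N in sequentially. supnorm nv (\<lambda>x. g x + h x - (\<Sum>n<N. (a n + b n) * f n x)) \<le>
      max (supnorm nv (\<lambda>x. g x - (\<Sum>n<N. a n * f n x))) (supnorm nv (\<lambda>x. h x - (\<Sum>n<N. b n * f n x)))"
    by (simp add: supnorm_add_le Ccarrier_diff g h partial_sum_Ccarrier)
qed

lemma has_expansion_single:
  assumes g: "g \<in> Ccarrier nv" and a: "has_expansion a g" and zero: "\<And>n. n \<noteq> m \<Longrightarrow> a n = 0"
    and x: "x \<in> Zp nv"
  shows "g x = a m * f m x"
proof -
  have "(\<Sum>n<N. a n * f n x) = a m * f m x" if "N > m" for N x
    using that zero by (subst sum.remove[of _ m]) (auto intro!: sum.neutral)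
  hence "eventually (\<lambda>N. supnorm nv (\<lambda>x. g x - (\<Sum>n<N. a n * f n x)) = supnorm nv (\<lambda>x. g x - a m * f m x)) sequentially"
    unfolding eventually_sequentially by (intro exI[of _ "Suc m"]) auto
  hence "(\<lambda>N. supnorm nv (\<lambda>x. g x - a m * f m x)) \<longlonglongrightarrow> 0"
    using a unfolding has_expansion_def by (rule Lim_transform_eventually[rotated])
  hence "supnorm nv (\<lambda>x. g x - a m * f m x) = 0"
    by (simp add: LIMSEQ_const_iff)
  thus ?thesis
    using supnorm_eq_0_imp[OF Ccarrier_diff[OF g Ccarrier_smult[OF f_Ccarrier]] _ x] by simp
qed

text \<open>If \<open>1 = u f\<^sub>m\<close> and \<open>x = \<Sum> v\<^sub>n f\<^sub>n\<close>, then either \<open>|v\<^sub>m| > |u|\<close> already, or adding \<open>1/p\<close> shifts \<open>v\<^sub>m\<close>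
  by \<open>u/p\<close>, which has absolute value \<open>p |u| > |u|\<close>.\<close>

lemma id_plus_dominating_expansion:
  assumes "u \<noteq> 0" and one: "has_expansion (\<lambda>n. if n = m then u else 0) const_one"
    and v: "has_expansion v (id_plus 0)"
  obtains c w where "has_expansion w (id_plus c)" "nv (w m) > nv u"
proof (cases "nv (v m) > nv u")
  case False
  define c :: 'k where "c = inverse (of_nat p)"
  have nv_c: "nv c = real p"
    unfolding c_def using nv_p_power[of 1] by (simp add: nv_inverse rad_def)
  define w where "w n = v n + c * (if n = m then u else 0)" for n
  have "has_expansion w (\<lambda>x. id_plus 0 x + c * const_one x)"
    unfolding w_def by (intro has_expansion_add has_expansion_smult id_plus_Ccarrier const_one_Ccarrier
        Ccarrier_smult one v)
  moreover have "(\<lambda>x. id_plus 0 x + c * const_one x) = id_plus c"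
    by (auto simp: fun_eq_iff id_plus_def const_one_def)
  moreover have big: "nv (c * u) > nv u"
    using nv_pos[OF \<open>u \<noteq> 0\<close>] p_gt_1 nv_c by (simp add: nv_mult)
  hence "nv (w m) = nv (c * u)"
    using False nv_add_eq_left[of "v m" "c * u"] by (simp add: w_def add.commute)
  ultimately show ?thesis
    using that big by auto
qed (use that v in blast)

end

locale haar_onb = haar_pair p nv M A B + padic_onb p nv f
  for p :: nat and nv :: "'k::field_char_0 \<Rightarrow> real" and M :: "'w measure" and A B :: "'w \<Rightarrow> 'k"
    and f :: "nat \<Rightarrow> 'k \<Rightarrow> 'k"
begin

lemma haar_process_Ccarrier: "h \<in> Ccarrier nv \<Longrightarrow> haar_process h \<omega> \<in> Ccarrier nv"
  unfolding haar_process_def by (rule affine_fn_Ccarrier)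

lemma haar_process_expansion:
  assumes h: "h \<in> Ccarrier nv" and u: "has_expansion u const_one" and v: "has_expansion v h"
  shows "has_expansion (\<lambda>n. A \<omega> * u n + B \<omega> * v n) (haar_process h \<omega>)"
  unfolding haar_process_def affine_fn_def[abs_def] fst_conv snd_conv
  by (intro has_expansion_add has_expansion_smult Ccarrier_smult const_one_Ccarrier h u v)

lemma has_expansion_zero: "has_expansion (\<lambda>_. 0) (\<lambda>_. 0)"
  using supnorm_least[of "\<lambda>_. 0" 0] supnorm_nonneg[OF zero_Ccarrier] by (simp add: has_expansion_def)

lemma haar_process_coeffs:
  assumes h: "h \<in> Ccarrier nv" and u: "has_expansion u const_one" and v: "has_expansion v h"
    and ae: "AE \<omega> in M. has_expansion (\<lambda>n. \<Gamma> n \<omega>) (haar_process h \<omega>)"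
  shows "AE \<omega> in M. \<forall>n. \<Gamma> n \<omega> = A \<omega> * u n + B \<omega> * v n"
  using ae
proof (rule AE_mp, intro AE_I2 impI)
  fix \<omega>
  assume "has_expansion (\<lambda>n. \<Gamma> n \<omega>) (haar_process h \<omega>)"
  from has_expansion_unique[OF haar_process_Ccarrier[OF h] this haar_process_expansion[OF h u v]]
  show "\<forall>n. \<Gamma> n \<omega> = A \<omega> * u n + B \<omega> * v n"
    by (simp add: fun_eq_iff)
qed

lemma const_one_expansion_exists:
  assumes ae: "AE \<omega> in M. has_expansion (\<lambda>n. \<Gamma> n \<omega>) (haar_process (\<lambda>_. 0) \<omega>)"
  obtains u where "has_expansion u const_one"
proof -
  have X: "haar_process (\<lambda>_. 0) \<omega> = (\<lambda>x. A \<omega> * const_one x)" for \<omega>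
    by (simp add: haar_process_def affine_fn_def fun_eq_iff)
  obtain \<omega> where "A \<omega> \<noteq> 0" and \<Gamma>: "has_expansion (\<lambda>n. \<Gamma> n \<omega>) (\<lambda>x. A \<omega> * const_one x)"
    using AE_exists_nonzero[of A, OF _ ae] unfolding X by blast
  have "has_expansion (\<lambda>n. inverse (A \<omega>) * \<Gamma> n \<omega>) (\<lambda>x. inverse (A \<omega>) * (A \<omega> * const_one x))"
    by (rule has_expansion_smult[OF Ccarrier_const_fun \<Gamma>])
  thus ?thesis
    using that \<open>A \<omega> \<noteq> 0\<close> by (simp add: mult.assoc[symmetric])
qed

lemma const_one_single_expansion:
  assumes indep: "prob_space.indep_vars M (\<lambda>_. Kborel nv) \<Gamma> UNIV"
    and ae: "AE \<omega> in M. has_expansion (\<lambda>n. \<Gamma> n \<omega>) (haar_process (\<lambda>_. 0) \<omega>)"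
  obtains m u where "u \<noteq> 0" "has_expansion (\<lambda>n. if n = m then u else 0) const_one"
proof -
  obtain u where u: "has_expansion u const_one"
    using const_one_expansion_exists[OF ae] .
  have coeffs: "AE \<omega> in M. \<forall>n. \<Gamma> n \<omega> = A \<omega> * u n"
    using haar_process_coeffs[OF zero_Ccarrier u has_expansion_zero ae] by simp
  have "u n = 0" if "u m \<noteq> 0" "n \<noteq> m" for n m
  proof (rule ccontr)
    assume "u n \<noteq> 0"
    have "AE \<omega> in M. nv (\<Gamma> k \<omega>) \<le> nv (u k) * rad 1 \<longleftrightarrow> nv (A \<omega>) \<le> rad 1" if "u k \<noteq> 0" for k
      using coeffs by eventually_elim (use nv_pos[OF that] in \<open>simp add: nv_mult mult.commute\<close>)
    thus False
      using indep_no_shared_event[OF indep \<open>n \<noteq> m\<close>, of 1 "nv (u n) * rad 1" "nv (u m) * rad 1" A]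
        \<open>u n \<noteq> 0\<close> \<open>u m \<noteq> 0\<close> nv_pos rad_pos by simp
  qed
  moreover obtain m where "u m \<noteq> 0"
    using has_expansion_single[OF const_one_Ccarrier u, of 0 0] by (force simp: const_one_def)
  ultimately have "u = (\<lambda>n. if n = m then u m else 0)"
    by auto
  thus ?thesis
    using that u \<open>u m \<noteq> 0\<close> by metis
qed

lemma expansion_exists:
  assumes h: "h \<in> Ccarrier nv" and u: "has_expansion u const_one"
    and ae: "AE \<omega> in M. has_expansion (\<lambda>n. \<Gamma> n \<omega>) (haar_process h \<omega>)"
  obtains v where "has_expansion v h"
proof -
  obtain \<omega> where "B \<omega> \<noteq> 0" and \<Gamma>: "has_expansion (\<lambda>n. \<Gamma> n \<omega>) (haar_process h \<omega>)"
    using AE_exists_nonzero[of B, OF _ ae] by auto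
  have "has_expansion (\<lambda>n. inverse (B \<omega>) * (\<Gamma> n \<omega> + - A \<omega> * u n))
      (\<lambda>x. inverse (B \<omega>) * (haar_process h \<omega> x + - A \<omega> * const_one x))"
    by (intro has_expansion_smult has_expansion_add \<Gamma> u Ccarrier_add Ccarrier_smult const_one_Ccarrier
        haar_process_Ccarrier h)
  moreover have "(\<lambda>x. inverse (B \<omega>) * (haar_process h \<omega> x + - A \<omega> * const_one x)) = h"
    using \<open>B \<omega> \<noteq> 0\<close> by (auto simp: fun_eq_iff haar_process_def affine_fn_def)
  ultimately show ?thesis
    using that by simp
qed

lemma id_plus_other_coefficient:
  assumes "u \<noteq> 0" and one: "has_expansion (\<lambda>n. if n = m then u else 0) const_one"
    and w: "has_expansion w (id_plus c)"
  obtains n where "n \<noteq> m" "w n \<noteq> 0"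
proof (rule ccontr)
  assume "\<not> thesis"
  hence "\<And>n. n \<noteq> m \<Longrightarrow> w n = 0"
    using that by blast
  hence "id_plus c x = w m * f m x" "const_one x = u * f m x" if "x \<in> Zp nv" for x
    using has_expansion_single[OF id_plus_Ccarrier w, of m] has_expansion_single[OF const_one_Ccarrier one, of m] that
    by auto
  hence "id_plus c x = w m / u" if "x \<in> Zp nv" for x
    using that \<open>u \<noteq> 0\<close> by (simp add: const_one_def field_simps)
  from this[of 0] this[of 1] show False
    by (simp add: id_plus_def)
qed

lemma affine_process_no_independent_expansion:
  assumes "u \<noteq> 0" and one: "has_expansion (\<lambda>n. if n = m then u else 0) const_one"
    and w: "has_expansion w (id_plus c)" and big: "nv (w m) > nv u"
    and indep: "prob_space.indep_vars M (\<lambda>_. Kborel nv) \<Gamma> UNIV"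
    and ae: "AE \<omega> in M. has_expansion (\<lambda>n. \<Gamma> n \<omega>) (haar_process (id_plus c) \<omega>)"
  shows False
proof -
  obtain n where n: "n \<noteq> m" "w n \<noteq> 0"
    using id_plus_other_coefficient[OF \<open>u \<noteq> 0\<close> one w] .
  have "w m \<noteq> 0"
    using big nv_nonneg[of u] by (cases "w m = 0") auto
  have coeffs: "AE \<omega> in M. \<forall>k. \<Gamma> k \<omega> = A \<omega> * (if k = m then u else 0) + B \<omega> * w k"
    by (rule haar_process_coeffs[OF id_plus_Ccarrier one w ae])
  have "u / w m \<noteq> 0" "nv (u / w m) < 1"
    using \<open>u \<noteq> 0\<close> \<open>w m \<noteq> 0\<close> big nv_pos by (auto simp: nv_divide)
  then obtain k where k: "nv (u / w m) = rad k"
    using nv_eq_rad[of "u / w m"] by force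
  hence "k > 0"
    using \<open>nv (u / w m) < 1\<close> by (cases k) auto
  have B_small: "nv (B \<omega>) * nv (w m) \<le> nv u \<longleftrightarrow> nv (B \<omega>) \<le> rad k" for \<omega>
    using nv_pos[OF \<open>w m \<noteq> 0\<close>] by (simp add: nv_divide pos_le_divide_eq flip: k)
  have "AE \<omega> in M. nv (\<Gamma> m \<omega>) \<le> nv u \<longleftrightarrow> nv (B \<omega>) \<le> rad k"
    using coeffs AE_in_unit_ball[OF insertI1]
    by eventually_elim (simp add: nv_add_le_iff nv_mult mult_left_le_one_le B_small)
  moreover have "AE \<omega> in M. nv (\<Gamma> n \<omega>) \<le> nv (w n) * rad k \<longleftrightarrow> nv (B \<omega>) \<le> rad k"
    using coeffs by eventually_elim (use n nv_pos[OF n(2)] in \<open>simp add: nv_mult mult.commute\<close>)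
  ultimately show False
    using indep_no_shared_event[OF indep n(1)[symmetric] \<open>k > 0\<close>, of "nv u" "nv (w n) * rad k" B]
      nv_pos[OF \<open>u \<noteq> 0\<close>] nv_pos[OF n(2)] rad_pos by simp
qed

end

theorem corollary8p4:
  fixes p :: nat and nv :: "'k::field_char_0 \<Rightarrow> real"
  assumes "prime p" and "is_Qp p nv"
  shows "\<not> (\<exists>f. orthonormal_basis_C nv f \<and>
           (\<forall>(M :: real measure) X.
              prob_space M \<and> C_gaussian_rv nv M X \<and> C_stationary nv M X \<longrightarrow>
              (\<exists>A. (\<forall>n. K_gaussian_rv nv M (A n)) \<and>
                   prob_space.indep_vars M (\<lambda>_. Kborel nv) A UNIV \<and>
                   series_repr nv M X A f)))"
proof (intro notI, elim exE conjE, goal_cases)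
  case (1 f)
  interpret padic_field p nv
    using assms by unfold_locales
  obtain M :: "real measure" and A B where "haar_pair p nv M A B"
    by (rule haar_pair_on_reals)
  then interpret haar_onb p nv M A B f
    using 1(1) by (simp add: haar_onb_def padic_onb_def padic_onb_axioms_def padic_field_axioms)
  have expansion: "\<exists>\<Gamma>. prob_space.indep_vars M (\<lambda>_. Kborel nv) \<Gamma> UNIV \<and>
      (AE \<omega> in M. has_expansion (\<lambda>n. \<Gamma> n \<omega>) (haar_process h \<omega>))"
    if "h \<in> Ccarrier nv" "shift_adds_constant h" for h
    using 1(2) haar_process_gaussian[OF C_separable_basis that(1)] haar_process_stationary[OF that] prob_space_M
    unfolding series_repr_def has_expansion_def by blast
  obtain \<Gamma> where "prob_space.indep_vars M (\<lambda>_. Kborel nv) \<Gamma> UNIV"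
    "AE \<omega> in M. has_expansion (\<lambda>n. \<Gamma> n \<omega>) (haar_process (\<lambda>_. 0) \<omega>)"
    using expansion[OF zero_Ccarrier shift_adds_constant_zero] by blast
  then obtain m u where u: "u \<noteq> 0" "has_expansion (\<lambda>n. if n = m then u else 0) const_one"
    by (rule const_one_single_expansion)
  obtain v where "has_expansion v (id_plus 0)"
    using expansion_exists[OF id_plus_Ccarrier u(2)] expansion[OF id_plus_Ccarrier shift_adds_constant_id_plus]
    by blast
  then obtain c w where "has_expansion w (id_plus c)" "nv (w m) > nv u"
    by (rule id_plus_dominating_expansion[OF u])
  thus False
    using affine_process_no_independent_expansion[OF u] expansion[OF id_plus_Ccarrier shift_adds_constant_id_plus]
    by blast
qed

end
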